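(* Every loopless $3$-irregular subcubic multigraph has a $(1^2,2^2)$-packing edge-coloring.
   Context: A multigraph may have parallel edges; the degree of a vertex counts edges with multiplicity. A multigraph is subcubic if every vertex has degree at most $3$. A multigraph is $3$-irregular if no two adjacent vertices both have degree $3$. The distance between two edges is the distance between the corresponding vertices in the line graph (so two edges sharing an endpoint, including parallel edges, are at distance $1$). A $(1^2,2^2)$-packing edge-coloring of $G$ is a partition of $E(G)$ into four sets $E_1,E_2,E_3,E_4$ such that any two distinct edges in $E_1$, or any two in $E_2$, are at distance at least $2$ (i.e. $E_1,E_2$ are matchings), and any two distinct edges in $E_3$, or any two in $E_4$, are at distance at least $3$ (i.e. $E_3,E_4$ are induced matchings). *)

theory Defs
  imports Main
begin

text \<open>A finite multigraph: vertex set V, edge set E of edge identifiers, and an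
  incidence map ends assigning to each edge its set of endpoints (one endpoint
  for a loop, two for an ordinary edge). Parallel edges are distinct identifiers
  with the same endpoints.\<close>

definition multigraph :: "'v set \<Rightarrow> 'e set \<Rightarrow> ('e \<Rightarrow> 'v set) \<Rightarrow> bool" where
  "multigraph V E ends \<longleftrightarrow> finite V \<and> finite E \<and>
     (\<forall>e\<in>E. ends e \<subseteq> V \<and> (card (ends e) = 1 \<or> card (ends e) = 2))"

definition loopless :: "'e set \<Rightarrow> ('e \<Rightarrow> 'v set) \<Rightarrow> bool" where
  "loopless E ends \<longleftrightarrow> (\<forall>e\<in>E. card (ends e) = 2)"

definition degree :: "'e set \<Rightarrow> ('e \<Rightarrow> 'v set) \<Rightarrow> 'v \<Rightarrow> nat" where
  "degree E ends v = (\<Sum>e\<in>{e\<in>E. v \<in> ends e}. if card (ends e) = 1 then 2 else 1)"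

definition subcubic :: "'v set \<Rightarrow> 'e set \<Rightarrow> ('e \<Rightarrow> 'v set) \<Rightarrow> bool" where
  "subcubic V E ends \<longleftrightarrow> (\<forall>v\<in>V. degree E ends v \<le> 3)"

definition adjacent :: "'e set \<Rightarrow> ('e \<Rightarrow> 'v set) \<Rightarrow> 'v \<Rightarrow> 'v \<Rightarrow> bool" where
  "adjacent E ends u v \<longleftrightarrow> u \<noteq> v \<and> (\<exists>e\<in>E. ends e = {u, v})"

definition irregular3 :: "'v set \<Rightarrow> 'e set \<Rightarrow> ('e \<Rightarrow> 'v set) \<Rightarrow> bool" where
  "irregular3 V E ends \<longleftrightarrow>
     (\<forall>u\<in>V. \<forall>v\<in>V. adjacent E ends u v \<longrightarrow> \<not> (degree E ends u = 3 \<and> degree E ends v = 3))"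

definition ladj :: "('e \<Rightarrow> 'v set) \<Rightarrow> 'e \<Rightarrow> 'e \<Rightarrow> bool" where
  "ladj ends e f \<longleftrightarrow> e \<noteq> f \<and> ends e \<inter> ends f \<noteq> {}"

definition dist_ge2 :: "'e set \<Rightarrow> ('e \<Rightarrow> 'v set) \<Rightarrow> 'e \<Rightarrow> 'e \<Rightarrow> bool" where
  "dist_ge2 E ends e f \<longleftrightarrow> \<not> ladj ends e f"

definition dist_ge3 :: "'e set \<Rightarrow> ('e \<Rightarrow> 'v set) \<Rightarrow> 'e \<Rightarrow> 'e \<Rightarrow> bool" where
  "dist_ge3 E ends e f \<longleftrightarrow> \<not> ladj ends e f \<and> \<not> (\<exists>g\<in>E. ladj ends e g \<and> ladj ends g f)"

definition packing_1122 :: "'e set \<Rightarrow> ('e \<Rightarrow> 'v set) \<Rightarrow> 'e set \<Rightarrow> 'e set \<Rightarrow> 'e set \<Rightarrow> 'e set \<Rightarrow> bool" where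
  "packing_1122 E ends E1 E2 E3 E4 \<longleftrightarrow>
     E1 \<union> E2 \<union> E3 \<union> E4 = E \<and>
     E1 \<inter> E2 = {} \<and> E1 \<inter> E3 = {} \<and> E1 \<inter> E4 = {} \<and>
     E2 \<inter> E3 = {} \<and> E2 \<inter> E4 = {} \<and> E3 \<inter> E4 = {} \<and>
     (\<forall>e\<in>E1. \<forall>f\<in>E1. e \<noteq> f \<longrightarrow> dist_ge2 E ends e f) \<and>
     (\<forall>e\<in>E2. \<forall>f\<in>E2. e \<noteq> f \<longrightarrow> dist_ge2 E ends e f) \<and>
     (\<forall>e\<in>E3. \<forall>f\<in>E3. e \<noteq> f \<longrightarrow> dist_ge3 E ends e f) \<and>
     (\<forall>e\<in>E4. \<forall>f\<in>E4. e \<noteq> f \<longrightarrow> dist_ge3 E ends e f)"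

end

theory Submission
  imports Defs
begin

text \<open>
  The theorem is proved by induction on the number of edges for a stronger invariant. Besides
  being a packing coloring, the coloring must let every vertex of degree 3 see both matching
  colors 1 and 2, so that one of the colors 3 and 4 is free at it, and it must give color 1 or 2
  to the edges at a set \<open>D\<close> of pinned vertices of degree at most 1. The pins are admissible if no
  vertex of degree 3 has all three edges pinned.

  Deleting the edges at a vertex \<open>u\<close> and pinning its neighbors forces the remaining edge at each
  neighbor to a matching color. Then an unpinned edge at \<open>u\<close> can take a color 3 or 4 that is
  free near its neighbor, and the other edges at \<open>u\<close> the colors 1 and 2. This works when the
  maximum degree is 2 (with a direct argument when both neighbors of \<open>u\<close> see the same color), and
  when \<open>u\<close> has degree 3 and pinning its neighbors keeps the pins admissible; here a Kempe change
  along a path colored 1 and 2 first makes the neighbors of \<open>u\<close> not all see the same matching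
  color. Otherwise some other vertex \<open>y\<close> of degree 3 has all its edges pinned or going to
  neighbors of \<open>u\<close>. Choosing \<open>u\<close> with the most pinned edges, a count shows that the neighbors of
  \<open>u\<close> have no edges except to \<open>u\<close> and \<open>y\<close>, and the color 3 or 4 missing at \<open>y\<close> is free for an
  unpinned edge at \<open>u\<close>, without new pins.
\<close>

section \<open>Subcubic graphs without adjacent vertices of degree 3\<close>

definition edges_at :: "'e set \<Rightarrow> ('e \<Rightarrow> 'v set) \<Rightarrow> 'v \<Rightarrow> 'e set" where
  "edges_at E ends v = {e\<in>E. v \<in> ends e}"

abbreviation deg :: "'e set \<Rightarrow> ('e \<Rightarrow> 'v set) \<Rightarrow> 'v \<Rightarrow> nat" where
  "deg E ends v \<equiv> card (edges_at E ends v)"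

definition edges_avoiding :: "'e set \<Rightarrow> ('e \<Rightarrow> 'v set) \<Rightarrow> 'v set \<Rightarrow> 'e set" where
  "edges_avoiding E ends S = {e\<in>E. ends e \<inter> S = {}}"

definition nbrs :: "'e set \<Rightarrow> ('e \<Rightarrow> 'v set) \<Rightarrow> 'v \<Rightarrow> 'v set" where
  "nbrs E ends u = (\<Union>e\<in>edges_at E ends u. ends e) - {u}"

definition other_end :: "('e \<Rightarrow> 'v set) \<Rightarrow> 'v \<Rightarrow> 'e \<Rightarrow> 'v" where
  "other_end ends u a = the_elem (ends a - {u})"

text \<open>An edge ending in \<open>x\<close> may take a color 3 or 4 only if no edge near \<open>x\<close> has it.\<close>
definition edges_near :: "'e set \<Rightarrow> ('e \<Rightarrow> 'v set) \<Rightarrow> 'v \<Rightarrow> 'e set" where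
  "edges_near E ends x = (\<Union>g\<in>edges_at E ends x. \<Union>z\<in>ends g. edges_at E ends z)"

definition irregular_subcubic :: "'e set \<Rightarrow> ('e \<Rightarrow> 'v set) \<Rightarrow> bool" where
  "irregular_subcubic E ends \<longleftrightarrow> finite E \<and> (\<forall>e\<in>E. card (ends e) = 2) \<and> (\<forall>v. deg E ends v \<le> 3)
     \<and> (\<forall>e\<in>E. \<exists>x\<in>ends e. deg E ends x \<le> 2)"

lemma ladj_sym: "ladj ends e f \<longleftrightarrow> ladj ends f e"
  unfolding ladj_def by auto

lemma ladjI: "e \<noteq> f \<Longrightarrow> v \<in> ends e \<Longrightarrow> v \<in> ends f \<Longrightarrow> ladj ends e f"
  unfolding ladj_def by auto

lemma ladjE: "ladj ends e f \<Longrightarrow> (\<And>v. e \<noteq> f \<Longrightarrow> v \<in> ends e \<Longrightarrow> v \<in> ends f \<Longrightarrow> P) \<Longrightarrow> P"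
  unfolding ladj_def by auto

lemma ladj_pairE:
  assumes "ladj ends e f" "ends e = {p, q}"
  obtains "p \<in> ends f" "f \<noteq> e" | "q \<in> ends f" "f \<noteq> e"
  using assms unfolding ladj_def by auto

lemma edges_at_iff [simp]: "e \<in> edges_at E ends v \<longleftrightarrow> e \<in> E \<and> v \<in> ends e"
  unfolding edges_at_def by auto

lemma edges_avoiding_iff [simp]: "e \<in> edges_avoiding E ends S \<longleftrightarrow> e \<in> E \<and> ends e \<inter> S = {}"
  unfolding edges_avoiding_def by auto

lemma nbrs_iff: "x \<in> nbrs E ends u \<longleftrightarrow> x \<noteq> u \<and> (\<exists>e\<in>E. u \<in> ends e \<and> x \<in> ends e)"
  unfolding nbrs_def by auto

lemma edges_near_iff:
  "f \<in> edges_near E ends x \<longleftrightarrow> (\<exists>g\<in>edges_at E ends x. \<exists>z\<in>ends g. f \<in> edges_at E ends z)"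
  unfolding edges_near_def by blast

lemma edges_at_subset_near: "edges_at E ends x \<subseteq> edges_near E ends x"
  unfolding edges_near_def by fastforce

lemma edges_at_avoiding_subset: "edges_at (edges_avoiding E ends S) ends v \<subseteq> edges_at E ends v"
  by auto

lemma finite_edges_at: "finite E \<Longrightarrow> finite (edges_at E ends v)"
  by (simp add: edges_at_def)

lemma deg_avoiding_le: "finite E \<Longrightarrow> deg (edges_avoiding E ends S) ends v \<le> deg E ends v"
  by (intro card_mono finite_edges_at edges_at_avoiding_subset)

lemma card_le1_cases:
  assumes "card A \<le> 1" "finite A"
  obtains "A = {}" | g where "A = {g}"
proof (cases "card A = 0")
  case True then show ?thesis using that(1) assms(2) by simp
next
  case False
  then have "card A = 1" using assms(1) by simp
  then show ?thesis using that(2) by (metis card_1_singletonE)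
qed

lemma card_le1_member: "card A \<le> 1 \<Longrightarrow> finite A \<Longrightarrow> a \<in> A \<Longrightarrow> A = {a}"
  by (metis card_le1_cases empty_iff singletonD)

lemma card_le2_pair:
  assumes "card A \<le> 2" "finite A" "a \<in> A" "b \<in> A" "a \<noteq> b"
  shows "A = {a, b}"
proof (rule ccontr)
  assume "A \<noteq> {a, b}"
  then obtain c where "c \<in> A" "c \<noteq> a" "c \<noteq> b" using assms(3,4) by blast
  then have "{a, b, c} \<subseteq> A" "card {a, b, c} = 3" using assms(3-5) by auto
  then have "3 \<le> card A" using card_mono[OF assms(2)] by metis
  then show False using assms(1) by linarith
qed

lemma card_2_elemE:
  assumes "card A = 2" "v \<in> A"
  obtains w where "A = {v, w}" "w \<noteq> v"
proof -
  obtain x y where "A = {x, y}" "x \<noteq> y" using assms(1) card_2_iff by metis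
  then show ?thesis using that assms(2) by (metis insert_commute insertE singletonD)
qed

lemma irregular_subcubicD:
  assumes "irregular_subcubic E ends"
  shows irregular_subcubic_finite: "finite E"
    and irregular_subcubic_two_ends: "e \<in> E \<Longrightarrow> card (ends e) = 2"
    and irregular_subcubic_deg_le3: "deg E ends v \<le> 3"
    and irregular_subcubic_low_end: "e \<in> E \<Longrightarrow> \<exists>x\<in>ends e. deg E ends x \<le> 2"
  using assms unfolding irregular_subcubic_def by auto

lemma irregular_subcubic_avoiding:
  assumes "irregular_subcubic E ends"
  shows "irregular_subcubic (edges_avoiding E ends S) ends"
proof -
  have fin: "finite E" by (rule irregular_subcubic_finite[OF assms])
  have "\<exists>x\<in>ends e. deg (edges_avoiding E ends S) ends x \<le> 2"
    if e: "e \<in> edges_avoiding E ends S" for e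
  proof -
    obtain x where "x \<in> ends e" "deg E ends x \<le> 2"
      using irregular_subcubic_low_end[OF assms] e by auto
    then show ?thesis using deg_avoiding_le[OF fin, of ends S x] by (meson order_trans)
  qed
  moreover have "deg (edges_avoiding E ends S) ends v \<le> 3" for v
    using deg_avoiding_le[OF fin, of ends S v] irregular_subcubic_deg_le3[OF assms, of v]
      by linarith
  ultimately show ?thesis
    using fin irregular_subcubic_two_ends[OF assms] unfolding irregular_subcubic_def
    by (auto simp: edges_avoiding_def)
qed

lemma other_end:
  assumes "irregular_subcubic E ends" "a \<in> edges_at E ends u"
  shows "ends a = {u, other_end ends u a}" "other_end ends u a \<noteq> u"
proof -
  obtain x where x: "ends a = {u, x}" "x \<noteq> u"
    using assms card_2_elemE[OF irregular_subcubic_two_ends] by (metis edges_at_iff)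
  then have "other_end ends u a = x" unfolding other_end_def by (simp add: insert_Diff_if)
  then show "ends a = {u, other_end ends u a}" "other_end ends u a \<noteq> u" using x by auto
qed

lemma other_end_in_nbrs:
  "irregular_subcubic E ends \<Longrightarrow> a \<in> edges_at E ends u \<Longrightarrow> other_end ends u a \<in> nbrs E ends u"
  using other_end unfolding nbrs_iff by fastforce

lemma nbrs_edgeE:
  assumes "irregular_subcubic E ends" "t \<in> nbrs E ends u"
  obtains a where "a \<in> edges_at E ends u" "ends a = {u, t}"
proof -
  obtain e where e: "e \<in> E" "u \<in> ends e" "t \<in> ends e" "t \<noteq> u"
    using assms(2) unfolding nbrs_iff by auto
  then have "ends e = {u, other_end ends u e}" using other_end[OF assms(1)] by simp
  then have "ends e = {u, t}" using e(3,4) by auto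
  then show ?thesis using that e by simp
qed

lemma no_edge_joins_deg3:
  assumes "irregular_subcubic E ends" "e \<in> E" "u \<in> ends e" "v \<in> ends e" "u \<noteq> v"
    "deg E ends u = 3" "deg E ends v = 3"
  shows False
proof -
  obtain w where "ends e = {u, w}"
    using card_2_elemE[OF irregular_subcubic_two_ends[OF assms(1,2)] assms(3)] by blast
  then have "ends e = {u, v}" using assms(4,5) by auto
  then show False using irregular_subcubic_low_end[OF assms(1,2)] assms(6,7) by auto
qed

lemma deg_nbr_of_deg3:
  assumes "irregular_subcubic E ends" "deg E ends u = 3" "x \<in> nbrs E ends u"
  shows "deg E ends x \<le> 2"
proof -
  obtain e where "e \<in> E" "u \<in> ends e" "x \<in> ends e" "x \<noteq> u" using assms(3) unfolding nbrs_iff by auto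
  then have "deg E ends x \<noteq> 3" using no_edge_joins_deg3[OF assms(1)] assms(2) by blast
  then show ?thesis using irregular_subcubic_deg_le3[OF assms(1), of x] by linarith
qed

section \<open>Colorings with pinned vertices\<close>

definition packing_coloring :: "'e set \<Rightarrow> ('e \<Rightarrow> 'v set) \<Rightarrow> ('e \<Rightarrow> nat) \<Rightarrow> bool" where
  "packing_coloring E ends col \<longleftrightarrow> (\<forall>e\<in>E. col e \<in> {1,2,3,4}) \<and>
     (\<forall>e\<in>E. \<forall>f\<in>E. ladj ends e f \<longrightarrow> col e \<noteq> col f) \<and>
     (\<forall>e\<in>E. \<forall>f\<in>E. \<forall>g\<in>E. e \<noteq> f \<longrightarrow> col e = col f \<longrightarrow> 3 \<le> col e \<longrightarrow>
         \<not> (ladj ends e g \<and> ladj ends g f))"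

definition pinned_edges_at :: "'e set \<Rightarrow> ('e \<Rightarrow> 'v set) \<Rightarrow> 'v set \<Rightarrow> 'v \<Rightarrow> 'e set" where
  "pinned_edges_at E ends D v = {e\<in>edges_at E ends v. ends e \<inter> D \<noteq> {}}"

definition admissible_pins :: "'e set \<Rightarrow> ('e \<Rightarrow> 'v set) \<Rightarrow> 'v set \<Rightarrow> bool" where
  "admissible_pins E ends D \<longleftrightarrow> (\<forall>p\<in>D. deg E ends p \<le> 1) \<and>
     (\<forall>v. deg E ends v = 3 \<longrightarrow> card (pinned_edges_at E ends D v) \<le> 2)"

definition good_coloring :: "'e set \<Rightarrow> ('e \<Rightarrow> 'v set) \<Rightarrow> 'v set \<Rightarrow> ('e \<Rightarrow> nat) \<Rightarrow> bool" where
  "good_coloring E ends D col \<longleftrightarrow> packing_coloring E ends col \<and>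
     (\<forall>v. deg E ends v = 3 \<longrightarrow> {1,2} \<subseteq> col ` edges_at E ends v) \<and>
     (\<forall>e\<in>E. ends e \<inter> D \<noteq> {} \<longrightarrow> col e \<le> 2)"

lemma pinned_edges_at_iff [simp]:
  "e \<in> pinned_edges_at E ends D v \<longleftrightarrow> e \<in> E \<and> v \<in> ends e \<and> ends e \<inter> D \<noteq> {}"
  unfolding pinned_edges_at_def by auto

lemma finite_pinned_edges_at: "finite E \<Longrightarrow> finite (pinned_edges_at E ends D v)"
  by (simp add: pinned_edges_at_def edges_at_def)

lemma admissible_pinsD:
  assumes "admissible_pins E ends D"
  shows admissible_pins_deg: "p \<in> D \<Longrightarrow> deg E ends p \<le> 1"
    and admissible_pins_deg3: "deg E ends v = 3 \<Longrightarrow> card (pinned_edges_at E ends D v) \<le> 2"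
  using assms unfolding admissible_pins_def by auto

lemma admissible_pins_notin: "admissible_pins E ends D \<Longrightarrow> 2 \<le> deg E ends v \<Longrightarrow> v \<notin> D"
  using admissible_pins_deg by fastforce

lemma admissible_pins_single:
  assumes "irregular_subcubic E ends" "admissible_pins E ends D" "x \<in> D" "a \<in> edges_at E ends x"
  shows "edges_at E ends x = {a}"
  by (rule card_le1_member[OF admissible_pins_deg[OF assms(2,3)]
        finite_edges_at[OF irregular_subcubic_finite[OF assms(1)]] assms(4)])

lemma packing_coloringD:
  assumes "packing_coloring E ends col"
  shows packing_coloring_range: "e \<in> E \<Longrightarrow> col e \<in> {1,2,3,4}"
    and packing_coloring_ladj: "e \<in> E \<Longrightarrow> f \<in> E \<Longrightarrow> ladj ends e f \<Longrightarrow> col e \<noteq> col f"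
    and packing_coloring_dist2: "e \<in> E \<Longrightarrow> f \<in> E \<Longrightarrow> g \<in> E \<Longrightarrow> e \<noteq> f \<Longrightarrow> col e = col f
       \<Longrightarrow> 3 \<le> col e \<Longrightarrow> ladj ends e g \<Longrightarrow> ladj ends g f \<Longrightarrow> False"
  using assms unfolding packing_coloring_def by blast+

lemma good_coloringD:
  assumes "good_coloring E ends D col"
  shows good_coloring_packing: "packing_coloring E ends col"
    and good_coloring_deg3: "deg E ends v = 3 \<Longrightarrow> {1,2} \<subseteq> col ` edges_at E ends v"
    and good_coloring_pinned: "e \<in> E \<Longrightarrow> ends e \<inter> D \<noteq> {} \<Longrightarrow> col e \<le> 2"
  using assms unfolding good_coloring_def by blast+

lemma good_coloring_pinned_12:
  "good_coloring E ends D col \<Longrightarrow> p \<in> D \<Longrightarrow> e \<in> edges_at E ends p \<Longrightarrow> col e \<in> {1,2}"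
  using good_coloring_pinned packing_coloring_range[OF good_coloring_packing] by fastforce

lemma packing_coloring_cong:
  "(\<And>e. e \<in> E \<Longrightarrow> c e = c' e) \<Longrightarrow> packing_coloring E ends c \<longleftrightarrow> packing_coloring E ends c'"
  unfolding packing_coloring_def by simp

lemma good_coloring_cong:
  assumes "\<And>e. e \<in> E \<Longrightarrow> c e = c' e"
  shows "good_coloring E ends D c \<longleftrightarrow> good_coloring E ends D c'"
proof -
  have im: "c ` edges_at E ends v = c' ` edges_at E ends v" for v using assms by auto
  have pc: "packing_coloring E ends c \<longleftrightarrow> packing_coloring E ends c'"
    by (rule packing_coloring_cong[OF assms])
  have pin: "(\<forall>e\<in>E. ends e \<inter> D \<noteq> {} \<longrightarrow> c e \<le> 2) \<longleftrightarrow> (\<forall>e\<in>E. ends e \<inter> D \<noteq> {} \<longrightarrow> c' e \<le> 2)"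
    using assms by auto
  show ?thesis by (simp only: good_coloring_def im pc pin)
qed

lemma packing_coloring_extend:
  assumes two: "\<forall>e\<in>E. card (ends e) = 2"
    and old: "packing_coloring (edges_avoiding E ends S) ends col"
    and range: "\<forall>e\<in>E - edges_avoiding E ends S. col e \<in> {1,2,3,4}"
    and adj: "\<forall>e\<in>E - edges_avoiding E ends S. \<forall>f\<in>E. ladj ends e f \<longrightarrow> col e \<noteq> col f"
    and dist2: "\<forall>e\<in>E - edges_avoiding E ends S. \<forall>f\<in>E. \<forall>g\<in>E. e \<noteq> f \<longrightarrow> col e = col f \<longrightarrow>
                  3 \<le> col e \<longrightarrow> \<not> (ladj ends e g \<and> ladj ends g f)"
  shows "packing_coloring E ends col"
  unfolding packing_coloring_def
proof (intro conjI ballI impI notI)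
  let ?E' = "edges_avoiding E ends S"
  fix e assume "e \<in> E"
  then show "col e \<in> {1,2,3,4}"
    using packing_coloring_range[OF old] range by (cases "e \<in> ?E'") auto
next
  let ?E' = "edges_avoiding E ends S"
  fix e f assume ef: "e \<in> E" "f \<in> E" "ladj ends e f" "col e = col f"
  have fe: "ladj ends f e" using ef(3) ladj_sym by metis
  show False
  proof (cases "e \<in> ?E' \<and> f \<in> ?E'")
    case True then show False using packing_coloring_ladj[OF old _ _ ef(3)] ef(4) by blast
  next
    case False
    then have "e \<in> E - ?E' \<or> f \<in> E - ?E'" using ef by auto
    then show False
    proof
      assume "e \<in> E - ?E'" then show False using adj[rule_format, OF _ ef(2,3)] ef(4) by blast
    next
      assume "f \<in> E - ?E'" then show False using adj[rule_format, OF _ ef(1) fe] ef(4) by auto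
    qed
  qed
next
  let ?E' = "edges_avoiding E ends S"
  fix e f g assume efg: "e \<in> E" "f \<in> E" "g \<in> E" "e \<noteq> f" "col e = col f" "3 \<le> col e"
    "ladj ends e g \<and> ladj ends g f"
  have gfe: "ladj ends f g \<and> ladj ends g e" using efg(7) ladj_sym by metis
  show False
  proof (cases "e \<in> ?E' \<and> f \<in> ?E'")
    case False
    then have "e \<in> E - ?E' \<or> f \<in> E - ?E'" using efg by auto
    then show False
    proof
      assume "e \<in> E - ?E'"
      then show False using dist2[rule_format, OF _ efg(2,3,4,5,6)] efg(7) by blast
    next
      assume "f \<in> E - ?E'"
      then show False
        using dist2[rule_format, OF _ efg(1,3) efg(4)[symmetric] efg(5)[symmetric]] efg(5,6) gfe
        by auto
    qed
  next
    case True
    show False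
    proof (cases "g \<in> ?E'")
      case True
      then show False using packing_coloring_dist2[OF old] \<open>e \<in> ?E' \<and> f \<in> ?E'\<close> efg by blast
    next
      case False
      \<comment> \<open>\<open>g\<close> meets \<open>S\<close>, so \<open>e\<close> and \<open>f\<close> both meet \<open>g\<close> in its other end\<close>
      then obtain s where s: "s \<in> ends g" "s \<in> S" using efg(3) by auto
      obtain x where x: "ends g = {s, x}" using card_2_elemE[OF bspec[OF two efg(3)] s(1)] by blast
      obtain v where v: "v \<in> ends e" "v \<in> ends g" using efg(7) by (auto elim: ladjE)
      obtain v' where v': "v' \<in> ends g" "v' \<in> ends f" using efg(7) by (auto elim: ladjE)
      have "v \<notin> S" "v' \<notin> S" using v(1) v'(2) True by auto
      then have "v = x" "v' = x" using v(2) v'(1) x s(2) by auto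
      then have "ladj ends e f" using v v' efg(4) by (auto intro: ladjI)
      then show False using packing_coloring_ladj[OF old] True efg(5) by blast
    qed
  qed
qed

lemma good_coloring_extend:
  assumes old: "good_coloring (edges_avoiding E ends S) ends D' col"
    and packing: "packing_coloring E ends col"
    and deg3: "\<forall>v. deg E ends v = 3 \<longrightarrow> \<not> edges_at E ends v \<subseteq> edges_avoiding E ends S \<longrightarrow>
               {1,2} \<subseteq> col ` edges_at E ends v"
    and pinned: "\<forall>e\<in>E - edges_avoiding E ends S. ends e \<inter> D \<noteq> {} \<longrightarrow> col e \<le> 2"
    and pins: "D - S \<subseteq> D'"
  shows "good_coloring E ends D col"
  unfolding good_coloring_def
proof (intro conjI allI impI ballI)
  show "packing_coloring E ends col" by (fact packing)
next
  fix v assume v: "deg E ends v = 3"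
  show "{1,2} \<subseteq> col ` edges_at E ends v"
  proof (cases "edges_at E ends v \<subseteq> edges_avoiding E ends S")
    case True
    then have "edges_at (edges_avoiding E ends S) ends v = edges_at E ends v" by auto
    then show ?thesis using good_coloring_deg3[OF old] v by metis
  next
    case False then show ?thesis using deg3 v by blast
  qed
next
  fix e assume e: "e \<in> E" "ends e \<inter> D \<noteq> {}"
  show "col e \<le> 2"
  proof (cases "e \<in> edges_avoiding E ends S")
    case True
    then have "ends e \<inter> D' \<noteq> {}" using e(2) pins by auto
    then show ?thesis using good_coloring_pinned[OF old] True by blast
  next
    case False then show ?thesis using pinned e by blast
  qed
qed

lemma packing_coloring_extend_at_vertex:
  fixes E :: "'e set" and ends :: "'e \<Rightarrow> 'v set" and u :: 'v and \<sigma> c' :: "'e \<Rightarrow> nat"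
  defines "E' \<equiv> edges_avoiding E ends {u}" and "A \<equiv> edges_at E ends u"
    and "w \<equiv> other_end ends u"
  assumes irr: "irregular_subcubic E ends"
    and old: "packing_coloring E' ends c'"
    and range: "\<And>a. a \<in> A \<Longrightarrow> \<sigma> a \<in> {1,2,3,4}"
    and inj: "inj_on \<sigma> A"
    and near: "\<And>a. a \<in> A \<Longrightarrow> \<sigma> a \<notin> c' ` edges_at E' ends (w a)"
    and far: "\<And>a. a \<in> A \<Longrightarrow> 3 \<le> \<sigma> a \<Longrightarrow> \<sigma> a \<notin> c' ` edges_near E' ends (w a)"
    and across: "\<And>a b. a \<in> A \<Longrightarrow> b \<in> A \<Longrightarrow> a \<noteq> b \<Longrightarrow> 3 \<le> \<sigma> a \<Longrightarrow>
                   \<sigma> a \<notin> c' ` edges_at E' ends (w b)"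
  shows "packing_coloring E ends (\<lambda>e. if e \<in> E' then c' e else \<sigma> e)"
proof -
  define col where "col e = (if e \<in> E' then c' e else \<sigma> e)" for e
  have wa: "ends a = {u, w a}" if "a \<in> A" for a
    using other_end[OF irr] that unfolding A_def w_def by auto
  have new: "E - E' = A" unfolding E'_def A_def by auto
  have cA: "col a = \<sigma> a" if "a \<in> A" for a using that new unfolding col_def by auto
  have cO: "col e = c' e" if "e \<in> E'" for e using that unfolding col_def by simp
  have at_w: "f \<in> edges_at E' ends (w a) \<or> f \<in> A" if "a \<in> A" "f \<in> E" "w a \<in> ends f" for a f
    using that unfolding E'_def A_def by auto
  have Adiff: "col f \<noteq> col a" if "a \<in> A" "f \<in> A" "f \<noteq> a" for a f
    using inj_onD[OF inj] that cA by metis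
  have "packing_coloring E ends col"
  proof (rule packing_coloring_extend[where S = "{u}"])
    show "\<forall>e\<in>E. card (ends e) = 2" using irregular_subcubic_two_ends[OF irr] by blast
    show "packing_coloring (edges_avoiding E ends {u}) ends col"
      using old packing_coloring_cong[of E' col c'] cO unfolding E'_def by blast
    show "\<forall>e\<in>E - edges_avoiding E ends {u}. col e \<in> {1,2,3,4}"
      using range cA new unfolding E'_def by auto
    show "\<forall>a\<in>E - edges_avoiding E ends {u}. \<forall>f\<in>E. ladj ends a f \<longrightarrow> col a \<noteq> col f"
    proof (intro ballI impI)
      fix a f assume a: "a \<in> E - edges_avoiding E ends {u}" and f: "f \<in> E" and l: "ladj ends a f"
      have aA: "a \<in> A" using a new unfolding E'_def by simp
      show "col a \<noteq> col f"
      proof (rule ladj_pairE[OF l wa[OF aA]])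
        assume h: "u \<in> ends f" "f \<noteq> a"
        then have "f \<in> A" using f unfolding A_def by simp
        then show ?thesis using Adiff[OF aA _ h(2)] by metis
      next
        assume h: "w a \<in> ends f" "f \<noteq> a"
        then show ?thesis using at_w[OF aA f h(1)] near[OF aA] cA[OF aA] cO Adiff[OF aA] by force
      qed
    qed
    show "\<forall>a\<in>E - edges_avoiding E ends {u}. \<forall>f\<in>E. \<forall>g\<in>E. a \<noteq> f \<longrightarrow> col a = col f \<longrightarrow>
              3 \<le> col a \<longrightarrow> \<not> (ladj ends a g \<and> ladj ends g f)"
    proof (intro ballI impI notI)
      fix a f g assume a: "a \<in> E - edges_avoiding E ends {u}" and f: "f \<in> E" and g: "g \<in> E"
        and af: "a \<noteq> f" and cc: "col a = col f" and c3: "3 \<le> col a"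
        and l: "ladj ends a g \<and> ladj ends g f"
      have aA: "a \<in> A" using a new unfolding E'_def by simp
      have s3: "3 \<le> \<sigma> a" using c3 cA[OF aA] by simp
      have fA: "f \<notin> A" using Adiff[OF aA] af cc by metis
      then have fE': "f \<in> E'" using f new by blast
      have cf: "c' f = \<sigma> a" using cc cA[OF aA] cO[OF fE'] by simp
      show False
      proof (cases "g \<in> A")
        case True
        have "g \<noteq> a" using l unfolding ladj_def by auto
        show False
        proof (rule ladj_pairE[OF conjunct2[OF l] wa[OF True]])
          assume "u \<in> ends f" then show False using fA f unfolding A_def by simp
        next
          assume "w g \<in> ends f"
          then have "f \<in> edges_at E' ends (w g)" using fE' by simp
          then show False using across[OF aA True \<open>g \<noteq> a\<close>[symmetric] s3] cf by (metis image_eqI)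
        qed
      next
        case False
        then have gE': "g \<in> edges_at E' ends (w a)"
          using at_w[OF aA g] g l wa[OF aA] new unfolding ladj_def A_def by auto
        obtain z where z: "z \<in> ends g" "z \<in> ends f" using l by (auto elim: ladjE)
        have "f \<in> edges_near E' ends (w a)" unfolding edges_near_iff using gE' z fE' by auto
        then show False using far[OF aA s3] cf by (metis image_eqI)
      qed
    qed
  qed
  then show ?thesis unfolding col_def .
qed

lemma good_coloring_extend_at_vertex:
  fixes E :: "'e set" and ends :: "'e \<Rightarrow> 'v set" and u :: 'v and \<sigma> c' :: "'e \<Rightarrow> nat"
  defines "E' \<equiv> edges_avoiding E ends {u}" and "A \<equiv> edges_at E ends u"
    and "w \<equiv> other_end ends u"
  assumes irr: "irregular_subcubic E ends"
    and old: "good_coloring E' ends D' c'"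
    and pins: "D - {u} \<subseteq> D'"
    and low: "\<And>a. a \<in> A \<Longrightarrow> deg E ends (w a) \<le> 2"
    and range: "\<And>a. a \<in> A \<Longrightarrow> \<sigma> a \<in> {1,2,3,4}"
    and inj: "inj_on \<sigma> A"
    and near: "\<And>a. a \<in> A \<Longrightarrow> \<sigma> a \<notin> c' ` edges_at E' ends (w a)"
    and far: "\<And>a. a \<in> A \<Longrightarrow> 3 \<le> \<sigma> a \<Longrightarrow> \<sigma> a \<notin> c' ` edges_near E' ends (w a)"
    and across: "\<And>a b. a \<in> A \<Longrightarrow> b \<in> A \<Longrightarrow> a \<noteq> b \<Longrightarrow> 3 \<le> \<sigma> a \<Longrightarrow>
                   \<sigma> a \<notin> c' ` edges_at E' ends (w b)"
    and pinned: "\<And>a. a \<in> A \<Longrightarrow> ends a \<inter> D \<noteq> {} \<Longrightarrow> \<sigma> a \<le> 2"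
    and deg3: "deg E ends u = 3 \<Longrightarrow> {1,2} \<subseteq> \<sigma> ` A"
  shows "good_coloring E ends D (\<lambda>e. if e \<in> E' then c' e else \<sigma> e)"
proof -
  define col where "col e = (if e \<in> E' then c' e else \<sigma> e)" for e
  have new: "E - E' = A" unfolding E'_def A_def by auto
  have cA: "col a = \<sigma> a" if "a \<in> A" for a using that new unfolding col_def by auto
  have oldc: "good_coloring E' ends D' col"
    using good_coloring_cong[of E' col c'] old unfolding col_def by (metis (mono_tags, lifting))
  have packing: "packing_coloring E ends col"
    using packing_coloring_extend_at_vertex[OF irr good_coloring_packing[OF old[unfolded E'_def]]
        range[unfolded A_def] inj[unfolded A_def] near[unfolded A_def E'_def w_def]
        far[unfolded A_def E'_def w_def] across[unfolded A_def E'_def w_def]]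
    unfolding col_def E'_def .
  have "good_coloring E ends D col"
  proof (rule good_coloring_extend[OF oldc[unfolded E'_def] packing])
    show "\<forall>v. deg E ends v = 3 \<longrightarrow> \<not> edges_at E ends v \<subseteq> edges_avoiding E ends {u} \<longrightarrow>
              {1,2} \<subseteq> col ` edges_at E ends v"
    proof (intro allI impI)
      fix v assume v3: "deg E ends v = 3" and "\<not> edges_at E ends v \<subseteq> edges_avoiding E ends {u}"
      then obtain a where "a \<in> edges_at E ends v" "a \<notin> edges_avoiding E ends {u}" by blast
      then have a: "a \<in> A" "v \<in> ends a" unfolding A_def by auto
      have "v \<noteq> w a" using low[OF a(1)] v3 by auto
      then have "v = u" using a other_end[OF irr] unfolding A_def w_def by auto
      moreover have "col ` A = \<sigma> ` A" using cA by simp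
      ultimately show "{1,2} \<subseteq> col ` edges_at E ends v" using deg3 v3 unfolding A_def by simp
    qed
    show "\<forall>e\<in>E - edges_avoiding E ends {u}. ends e \<inter> D \<noteq> {} \<longrightarrow> col e \<le> 2"
      using pinned cA new unfolding E'_def by auto
  qed (use pins in auto)
  then show ?thesis unfolding col_def .
qed

lemma card_le3_free_color:
  fixes c :: "'e \<Rightarrow> nat"
  assumes "finite X" "card X \<le> 3" "card X = 3 \<Longrightarrow> {1,2} \<subseteq> c ` X" "e0 \<in> X" "c e0 \<in> {1,2}"
  shows "\<exists>d\<in>{3,4}. d \<notin> c ` X"
proof (rule ccontr)
  assume "\<not> ?thesis"
  then have sub: "{c e0, 3, 4} \<subseteq> c ` X" using assms(4) by auto
  have im: "card (c ` X) \<le> card X" by (rule card_image_le[OF assms(1)])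
  have "card {c e0, 3, 4} = 3" using assms(5) by auto
  then have "3 \<le> card (c ` X)" using card_mono[OF finite_imageI[OF assms(1)] sub] by simp
  then have "card X = 3" using im assms(2) by linarith
  then have "{1, 2, 3, 4} \<subseteq> c ` X" using assms(3) sub by blast
  then have "card {1, 2, 3, 4 :: nat} \<le> card (c ` X)"
    by (rule card_mono[OF finite_imageI[OF assms(1)]])
  then show False using im assms(2) by simp
qed

lemma good_coloring_free_color_at:
  assumes irr: "irregular_subcubic E ends" and good: "good_coloring E ends D c"
    and e0: "e0 \<in> edges_at E ends z" "c e0 \<in> {1,2}"
  shows "\<exists>d\<in>{3,4}. d \<notin> c ` edges_at E ends z"
  by (rule card_le3_free_color[OF finite_edges_at[OF irregular_subcubic_finite[OF irr]]
        irregular_subcubic_deg_le3[OF irr] good_coloring_deg3[OF good] e0])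

lemma good_coloring_free_color_near_pin:
  assumes irr: "irregular_subcubic E ends" and good: "good_coloring E ends D c"
    and q: "q \<in> D" "deg E ends q \<le> 1"
  shows "\<exists>d\<in>{3,4}. d \<notin> c ` edges_near E ends q"
proof (rule card_le1_cases[OF q(2) finite_edges_at[OF irregular_subcubic_finite[OF irr]]])
  assume "edges_at E ends q = {}"
  then show ?thesis unfolding edges_near_def by blast
next
  fix g assume g: "edges_at E ends q = {g}"
  then have gq: "g \<in> edges_at E ends q" by simp
  define z where "z = other_end ends q g"
  have gz: "ends g = {q, z}" using other_end[OF irr gq] unfolding z_def by simp
  then have "g \<in> edges_at E ends z" using gq by simp
  moreover have "c g \<in> {1,2}" by (rule good_coloring_pinned_12[OF good q(1) gq])
  ultimately obtain d where d: "d \<in> {3,4}" "d \<notin> c ` edges_at E ends z"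
    using good_coloring_free_color_at[OF irr good] by blast
  have "edges_near E ends q = (\<Union>x\<in>{q, z}. edges_at E ends x)"
    unfolding edges_near_def g using gz by simp
  also have "\<dots> = edges_at E ends z"
    using g \<open>g \<in> edges_at E ends z\<close> insert_absorb by fastforce
  finally show ?thesis using d by blast
qed

section \<open>Kempe chains\<close>

definition kempe_rel :: "'e set \<Rightarrow> ('e \<Rightarrow> 'v set) \<Rightarrow> ('e \<Rightarrow> nat) \<Rightarrow> ('e \<times> 'e) set" where
  "kempe_rel E ends col = {(e,f). e \<in> E \<and> f \<in> E \<and> col e \<in> {1,2} \<and> col f \<in> {1,2} \<and> ladj ends e f}"

definition kempe_chain :: "'e set \<Rightarrow> ('e \<Rightarrow> 'v set) \<Rightarrow> ('e \<Rightarrow> nat) \<Rightarrow> 'e \<Rightarrow> 'e set" where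
  "kempe_chain E ends col g = {f. (g, f) \<in> (kempe_rel E ends col)\<^sup>*}"

definition kempe_swap :: "'e set \<Rightarrow> ('e \<Rightarrow> 'v set) \<Rightarrow> ('e \<Rightarrow> nat) \<Rightarrow> 'e \<Rightarrow> 'e \<Rightarrow> nat" where
  "kempe_swap E ends col g = (\<lambda>e. if e \<in> kempe_chain E ends col g then 3 - col e else col e)"

lemma kempe_chain_self: "g \<in> kempe_chain E ends col g"
  unfolding kempe_chain_def by auto

lemma kempe_chain_mem:
  assumes "g \<in> E" "col g \<in> {1,2}" "f \<in> kempe_chain E ends col g"
  shows "f \<in> E \<and> col f \<in> {1,2}"
proof -
  have "(g, f) \<in> (kempe_rel E ends col)\<^sup>*" using assms(3) unfolding kempe_chain_def by auto
  then show ?thesis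
  proof (cases rule: rtrancl.cases)
    case rtrancl_refl then show ?thesis using assms by auto
  next
    case (rtrancl_into_rtrancl b) then show ?thesis unfolding kempe_rel_def by auto
  qed
qed

lemma kempe_chain_closed:
  assumes "e \<in> kempe_chain E ends col g" "e \<in> E" "col e \<in> {1,2}"
    and "f \<in> E" "col f \<in> {1,2}" "ladj ends e f"
  shows "f \<in> kempe_chain E ends col g"
proof -
  have "(e, f) \<in> kempe_rel E ends col" using assms(2-6) unfolding kempe_rel_def by auto
  then show ?thesis using assms(1) unfolding kempe_chain_def by (auto intro: rtrancl_into_rtrancl)
qed

lemma kempe_swap_in: "e \<in> kempe_chain E ends col g \<Longrightarrow> kempe_swap E ends col g e = 3 - col e"
  unfolding kempe_swap_def by simp

lemma kempe_swap_out: "e \<notin> kempe_chain E ends col g \<Longrightarrow> kempe_swap E ends col g e = col e"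
  unfolding kempe_swap_def by simp

lemma packing_coloring_kempe_swap:
  assumes pr: "packing_coloring E ends col" and g: "g \<in> E" "col g \<in> {1,2}"
  shows "packing_coloring E ends (kempe_swap E ends col g)"
proof -
  let ?K = "kempe_chain E ends col g" and ?c = "kempe_swap E ends col g"
  have Km: "\<And>f. f \<in> ?K \<Longrightarrow> f \<in> E \<and> col f \<in> {1,2}" using kempe_chain_mem[of g E col, OF g] by blast
  show ?thesis
    unfolding packing_coloring_def
  proof (intro conjI ballI impI notI)
    fix e assume "e \<in> E"
    then show "?c e \<in> {1,2,3,4}" using packing_coloring_range[OF pr] Km kempe_swap_in kempe_swap_out
      by (cases "e \<in> ?K") fastforce+
  next
    fix e f assume ef: "e \<in> E" "f \<in> E" "ladj ends e f" and same: "?c e = ?c f"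
    have d: "col e \<noteq> col f" using packing_coloring_ladj[OF pr ef] .
    have fe: "ladj ends f e" using ef(3) ladj_sym by metis
    have "?c e \<noteq> ?c f"
    proof (cases "e \<in> ?K")
      case True
      show ?thesis
      proof (cases "f \<in> ?K")
        case True
        then show ?thesis using kempe_swap_in[OF \<open>e \<in> ?K\<close>] kempe_swap_in[OF True]
            Km[OF \<open>e \<in> ?K\<close>] Km[OF True] d by auto
      next
        case False
        then have "col f \<notin> {1,2}"
          using kempe_chain_closed[OF True _ _ ef(2) _ ef(3)] Km[OF True] by blast
        then show ?thesis using kempe_swap_in[OF True] kempe_swap_out[OF False] Km[OF True] by auto
      qed
    next
      case False
      show ?thesis
      proof (cases "f \<in> ?K")
        case True
        then have "col e \<notin> {1,2}"
          using kempe_chain_closed[OF True _ _ ef(1) _ fe] Km[OF True] False by blast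
        then show ?thesis using kempe_swap_in[OF True] kempe_swap_out[OF False] Km[OF True] by auto
      next
        case False
        then show ?thesis using kempe_swap_out[OF \<open>e \<notin> ?K\<close>] kempe_swap_out[OF False] d by simp
      qed
    qed
    then show False using same by contradiction
  next
    fix e f g' assume efg: "e \<in> E" "f \<in> E" "g' \<in> E" "e \<noteq> f" "?c e = ?c f" "3 \<le> ?c e"
      "ladj ends e g' \<and> ladj ends g' f"
    have "e \<notin> ?K" using efg(6) kempe_swap_in Km by fastforce
    moreover have "f \<notin> ?K" using efg(5,6) kempe_swap_in Km by fastforce
    ultimately have "?c e = col e" "?c f = col f" by (simp_all add: kempe_swap_out)
    then have "col e = col f" "3 \<le> col e" using efg(5,6) by simp_all
    then show False using packing_coloring_dist2[OF pr efg(1,2,3,4)] efg(7) by blast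
  qed
qed

lemma good_coloring_kempe_swap:
  assumes gd: "good_coloring E ends D col" and g: "g \<in> E" "col g \<in> {1,2}"
  shows "good_coloring E ends D (kempe_swap E ends col g)"
proof -
  let ?K = "kempe_chain E ends col g" and ?c = "kempe_swap E ends col g"
  have Km: "\<And>f. f \<in> ?K \<Longrightarrow> f \<in> E \<and> col f \<in> {1,2}" using kempe_chain_mem[of g E col, OF g] by blast
  show ?thesis
    unfolding good_coloring_def
  proof (intro conjI allI impI ballI)
    show "packing_coloring E ends ?c"
      by (rule packing_coloring_kempe_swap[OF good_coloring_packing[OF gd] g])
    fix v assume v: "deg E ends v = 3"
    obtain e1 e2 where e: "e1 \<in> edges_at E ends v" "col e1 = 1"
      "e2 \<in> edges_at E ends v" "col e2 = 2"
      using good_coloring_deg3[OF gd v] by (metis imageE insert_subset)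
    have "ladj ends e1 e2" "ladj ends e2 e1" using e by (auto intro: ladjI)
    then have "e1 \<in> ?K \<longleftrightarrow> e2 \<in> ?K" using kempe_chain_closed e by (metis edges_at_iff insertCI)
    then have "{?c e1, ?c e2} = {1, 2}"
      using e by (cases "e1 \<in> ?K") (auto simp: kempe_swap_in kempe_swap_out)
    moreover have "{?c e1, ?c e2} \<subseteq> ?c ` edges_at E ends v" using e(1,3) by blast
    ultimately show "{1,2} \<subseteq> ?c ` edges_at E ends v" by simp
  next
    fix e assume "e \<in> E" "ends e \<inter> D \<noteq> {}"
    then have "col e \<le> 2" using good_coloring_pinned[OF gd] by blast
    then show "?c e \<le> 2" by (cases "e \<in> ?K") (auto simp: kempe_swap_in kempe_swap_out dest: Km)
  qed
qed

definition line_rel :: "'e set \<Rightarrow> ('e \<Rightarrow> 'v set) \<Rightarrow> ('e \<times> 'e) set" where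
  "line_rel C ends = {(x,y). x \<in> C \<and> y \<in> C \<and> ladj ends x y}"

definition line_connected :: "'e set \<Rightarrow> ('e \<Rightarrow> 'v set) \<Rightarrow> bool" where
  "line_connected C ends \<longleftrightarrow> (\<forall>e\<in>C. \<forall>f\<in>C. (e,f) \<in> (line_rel C ends)\<^sup>*)"

lemma line_connected_remove_leaf:
  assumes cn: "line_connected C ends"
    and i1: "edges_at C ends v1 = {e1}" and e1: "ends e1 = {v1, x}"
    and ix: "edges_at C ends x = {e1, e'}"
  shows "line_connected (C - {e1}) ends"
proof -
  let ?R = "line_rel C ends" and ?R' = "line_rel (C - {e1}) ends"
  have nb: "\<And>h. h \<in> C \<Longrightarrow> ladj ends h e1 \<Longrightarrow> h = e'"
  proof -
    fix h assume h: "h \<in> C" "ladj ends h e1"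
    then obtain w where w: "h \<noteq> e1" "w \<in> ends h" "w \<in> ends e1" by (auto elim: ladjE)
    then have "w = v1 \<or> w = x" using e1 by auto
    then show "h = e'"
    proof
      assume "w = v1" then have "h \<in> edges_at C ends v1" using h w by auto
      then show ?thesis using i1 w(1) by auto
    next
      assume "w = x" then have "h \<in> edges_at C ends x" using h w by auto
      then show ?thesis using ix w(1) by auto
    qed
  qed
  have main: "(f, g) \<in> ?R\<^sup>* \<Longrightarrow> f \<in> C - {e1} \<Longrightarrow>
      (g \<noteq> e1 \<longrightarrow> (f, g) \<in> ?R'\<^sup>*) \<and> (g = e1 \<longrightarrow> (f, e') \<in> ?R'\<^sup>*)" for f g
  proof (induction rule: rtrancl_induct)
    case base then show ?case by auto
  next
    case (step h g)
    have hg: "h \<in> C" "g \<in> C" "ladj ends h g" using step(2) unfolding line_rel_def by auto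
    show ?case
    proof (cases "h = e1")
      case True
      then have fe: "(f, e') \<in> ?R'\<^sup>*" using step by auto
      have "ladj ends g e1" using hg(3) True ladj_sym by metis
      then have "g = e'" using nb hg(2) by blast
      moreover have "g \<noteq> e1" using hg(3) True unfolding ladj_def by auto
      ultimately show ?thesis using fe by auto
    next
      case False
      then have fh: "(f, h) \<in> ?R'\<^sup>*" using step by auto
      show ?thesis
      proof (cases "g = e1")
        case True
        then have "h = e'" using nb hg(1,3) by blast
        then show ?thesis using fh True by auto
      next
        case False
        then have "(h, g) \<in> ?R'" using hg \<open>h \<noteq> e1\<close> unfolding line_rel_def by auto
        then show ?thesis using fh False by (auto intro: rtrancl_into_rtrancl)
      qed
    qed
  qed
  show ?thesis unfolding line_connected_def
  proof (intro ballI)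
    fix f g assume fg: "f \<in> C - {e1}" "g \<in> C - {e1}"
    then have "(f, g) \<in> ?R\<^sup>*" using cn unfolding line_connected_def by auto
    then show "(f, g) \<in> ?R'\<^sup>*" using main fg by auto
  qed
qed

lemma line_connected_isolated_edge:
  assumes cn: "line_connected C ends"
    and i1: "edges_at C ends v1 = {e1}" and e1: "ends e1 = {v1, x}"
    and ix: "edges_at C ends x = {e1}"
  shows "C = {e1}"
proof -
  have e1C: "e1 \<in> C" using i1 by auto
  have "(e1, f) \<in> (line_rel C ends)\<^sup>* \<Longrightarrow> f = e1" for f
  proof (induction rule: rtrancl_induct)
    case base then show ?case by simp
  next
    case (step h g)
    then have hg: "h = e1" "g \<in> C" "ladj ends e1 g" unfolding line_rel_def by auto
    then obtain w where w: "e1 \<noteq> g" "w \<in> ends e1" "w \<in> ends g" by (auto elim: ladjE)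
    then have "g \<in> edges_at C ends v1 \<or> g \<in> edges_at C ends x" using e1 hg(2) by auto
    then show ?case using i1 ix w(1) by auto
  qed
  then show ?thesis using cn e1C unfolding line_connected_def by blast
qed

lemma line_connected_no_three_leaves:
  assumes "finite C" "\<forall>e\<in>C. card (ends e) = 2" "\<forall>v. deg C ends v \<le> 2" "line_connected C ends"
    "v1 \<noteq> v2" "v1 \<noteq> v3" "v2 \<noteq> v3"
    "deg C ends v1 = 1" "deg C ends v2 = 1" "deg C ends v3 = 1"
  shows False
  using assms
proof (induction "card C" arbitrary: C v1 v2 v3 rule: less_induct)
  case less
  obtain e1 where i1: "edges_at C ends v1 = {e1}" using less.prems(8) card_1_singletonE by blast
  then have e1C: "e1 \<in> C" "v1 \<in> ends e1" by auto
  obtain x where x: "ends e1 = {v1, x}" "x \<noteq> v1"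
    using card_2_elemE[OF bspec[OF less.prems(2) e1C(1)] e1C(2)] by blast
  have xin: "e1 \<in> edges_at C ends x" using e1C x by auto
  have finx: "finite (edges_at C ends x)" using less.prems(1) by (rule finite_edges_at)
  show False
  proof (cases "deg C ends x = 1")
    case True
    then have ix: "edges_at C ends x = {e1}" using xin by (metis card_1_singletonE singletonD)
    have C1: "C = {e1}" using line_connected_isolated_edge[OF less.prems(4) i1 x(1) ix] .
    have "\<And>v. deg C ends v = 1 \<Longrightarrow> v \<in> ends e1"
    proof -
      fix v assume "deg C ends v = 1"
      then obtain e where "edges_at C ends v = {e}" using card_1_singletonE by blast
      then have "e \<in> C" "v \<in> ends e" by auto
      then show "v \<in> ends e1" using C1 by auto
    qed
    then have "v2 \<in> {v1,x}" "v3 \<in> {v1,x}" using less.prems(9,10) x(1) by auto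
    then show False using less.prems(5,6,7) by auto
  next
    case False
    have "deg C ends x \<noteq> 0" using xin finx by auto
    then have "deg C ends x = 2"
      using False less.prems(3) by (metis le_Suc_eq le_zero_eq numeral_2_eq_2 One_nat_def)
    then obtain e' where ix: "edges_at C ends x = {e1, e'}" "e' \<noteq> e1"
      using card_2_elemE[of "edges_at C ends x" e1] xin by metis
    let ?C = "C - {e1}"
    have cc: "card ?C < card C" by (rule card_Diff1_less[OF less.prems(1) e1C(1)])
    have fin: "finite ?C" using less.prems(1) by auto
    have two: "\<forall>e\<in>?C. card (ends e) = 2" using less.prems(2) by auto
    have deg: "\<forall>v. deg ?C ends v \<le> 2"
    proof
      fix v
      have "edges_at ?C ends v \<subseteq> edges_at C ends v" by auto
      then show "deg ?C ends v \<le> 2"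
        using card_mono[OF finite_edges_at[OF less.prems(1)]] less.prems(3)
        by (meson order_trans)
    qed
    have cn: "line_connected ?C ends"
      using line_connected_remove_leaf[OF less.prems(4) i1 x(1) ix(1)] .
    have x1: "edges_at ?C ends x = {e'}" using ix by auto
    have v2x: "v2 \<noteq> x" using less.prems(9) \<open>deg C ends x = 2\<close> by auto
    have v3x: "v3 \<noteq> x" using less.prems(10) \<open>deg C ends x = 2\<close> by auto
    have "edges_at ?C ends v2 = edges_at C ends v2" using x(1) less.prems(5) v2x by auto
    moreover have "edges_at ?C ends v3 = edges_at C ends v3" using x(1) less.prems(6) v3x by auto
    ultimately show False
      using less.hyps[OF cc fin two deg cn, of x v2 v3] x1 v2x v3x less.prems(7,9,10) by auto
  qed
qed

lemma line_connected_kempe_chain: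
  assumes g: "g \<in> E" "col g \<in> {1,2}"
  shows "line_connected (kempe_chain E ends col g) ends"
proof -
  let ?K = "kempe_chain E ends col g"
  have reach: "(g, y) \<in> (kempe_rel E ends col)\<^sup>* \<Longrightarrow> (g, y) \<in> (line_rel ?K ends)\<^sup>*" for y
  proof (induction rule: rtrancl_induct)
    case base then show ?case by simp
  next
    case (step h y)
    have "h \<in> ?K" "y \<in> ?K"
      using step(1,2) unfolding kempe_chain_def by (auto intro: rtrancl_into_rtrancl)
    then have "(h, y) \<in> line_rel ?K ends" using step(2) unfolding line_rel_def kempe_rel_def by auto
    then show ?case using step(3) by (auto intro: rtrancl_into_rtrancl)
  qed
  have sy: "sym ((line_rel ?K ends)\<^sup>*)"
    by (rule sym_rtrancl) (auto simp: sym_def line_rel_def ladj_def)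
  show ?thesis unfolding line_connected_def
  proof (intro ballI)
    fix e f assume "e \<in> ?K" "f \<in> ?K"
    then have "(g, e) \<in> (line_rel ?K ends)\<^sup>*" "(g, f) \<in> (line_rel ?K ends)\<^sup>*"
      using reach unfolding kempe_chain_def by auto
    then have "(e, g) \<in> (line_rel ?K ends)\<^sup>*" using sy unfolding sym_def by blast
    then show "(e, f) \<in> (line_rel ?K ends)\<^sup>*" using \<open>(g, f) \<in> _\<close> by (rule rtrancl_trans)
  qed
qed

lemma deg_kempe_chain:
  assumes pr: "packing_coloring E ends col" and g: "g \<in> E" "col g \<in> {1,2}"
  shows "deg (kempe_chain E ends col g) ends v \<le> 2"
proof -
  let ?A = "edges_at (kempe_chain E ends col g) ends v"
  have sub: "\<And>e. e \<in> ?A \<Longrightarrow> e \<in> E \<and> col e \<in> {1,2}" using kempe_chain_mem[of g E col, OF g] by auto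
  have "inj_on col ?A"
  proof (rule inj_onI)
    fix a b assume ab: "a \<in> ?A" "b \<in> ?A" "col a = col b"
    show "a = b"
    proof (rule ccontr)
      assume "a \<noteq> b"
      then have "ladj ends a b" using ab by (auto intro: ladjI)
      then show False using packing_coloring_ladj[OF pr] ab sub by blast
    qed
  qed
  moreover have "col ` ?A \<subseteq> {1,2}"
  proof
    fix c assume "c \<in> col ` ?A"
    then obtain e where "e \<in> ?A" "c = col e" by blast
    then show "c \<in> {1,2}" using sub[of e] by simp
  qed
  ultimately show ?thesis using card_inj_on_le[of col ?A "{1,2::nat}"] by auto
qed


lemma good_coloring_separate_three_pins:
  assumes irr: "irregular_subcubic E ends" and adm: "admissible_pins E ends D"
    and good: "good_coloring E ends D c0"
    and pins: "w1 \<in> D" "w2 \<in> D" "w3 \<in> D"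
    and distinct: "edges_at E ends w1 \<noteq> {} \<Longrightarrow> edges_at E ends w2 \<noteq> {} \<Longrightarrow>
                   edges_at E ends w3 \<noteq> {} \<Longrightarrow> w1 \<noteq> w2 \<and> w1 \<noteq> w3 \<and> w2 \<noteq> w3"
  shows "\<exists>c. good_coloring E ends D c \<and>
     \<not> (c ` edges_at E ends w1 \<noteq> {} \<and> c ` edges_at E ends w1 = c ` edges_at E ends w2
        \<and> c ` edges_at E ends w2 = c ` edges_at E ends w3)"
proof (cases "c0 ` edges_at E ends w1 \<noteq> {} \<and> c0 ` edges_at E ends w1 = c0 ` edges_at E ends w2
        \<and> c0 ` edges_at E ends w2 = c0 ` edges_at E ends w3")
  case False then show ?thesis using good by blast
next
  case True
  have fin: "finite E" by (rule irregular_subcubic_finite[OF irr])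
  have single: "\<exists>g. edges_at E ends w = {g}" if "w \<in> D" "c0 ` edges_at E ends w \<noteq> {}" for w
    using card_le1_cases[OF admissible_pins_deg[OF adm that(1)] finite_edges_at[OF fin]] that(2)
    by (metis image_empty)
  obtain g1 g2 g3 where g: "edges_at E ends w1 = {g1}" "edges_at E ends w2 = {g2}"
    "edges_at E ends w3 = {g3}"
    using single pins True by (metis image_is_empty)
  have gE: "g1 \<in> E" "g2 \<in> E" "g3 \<in> E" using g by auto
  have cg: "c0 g2 = c0 g1" "c0 g3 = c0 g1" using True g by auto
  have c12: "c0 g1 \<in> {1,2}" using good_coloring_pinned_12[OF good pins(1)] g(1) by simp
  have dw: "w1 \<noteq> w2" "w1 \<noteq> w3" "w2 \<noteq> w3" using distinct g by auto
  let ?K = "kempe_chain E ends c0 g1"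
  let ?c = "kempe_swap E ends c0 g1"
  have good': "good_coloring E ends D ?c" by (rule good_coloring_kempe_swap[OF good gE(1) c12])
  have K: "\<And>f. f \<in> ?K \<Longrightarrow> f \<in> E" using kempe_chain_mem[of g1 E c0, OF gE(1) c12] by blast
  \<comment> \<open>the Kempe chain of \<open>g1\<close> is a path or a cycle, so it cannot end in all three pins\<close>
  have not_both: "\<not> (g2 \<in> ?K \<and> g3 \<in> ?K)"
  proof
    assume both: "g2 \<in> ?K \<and> g3 \<in> ?K"
    have leaf: "deg ?K ends w = 1" if "edges_at E ends w = {g}" "g \<in> ?K" for w g
    proof -
      have "edges_at ?K ends w = {g}" using that K by auto
      then show ?thesis by simp
    qed
    show False
    proof (rule line_connected_no_three_leaves[OF _ _ _ _ dw])
      show "finite ?K" using K fin by (meson finite_subset subsetI)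
      show "\<forall>e\<in>?K. card (ends e) = 2" using K irregular_subcubic_two_ends[OF irr] by blast
      show "\<forall>v. deg ?K ends v \<le> 2"
        using deg_kempe_chain[OF good_coloring_packing[OF good] gE(1) c12] by blast
      show "line_connected ?K ends"
        by (rule line_connected_kempe_chain[where col = c0, OF gE(1) c12])
      show "deg ?K ends w1 = 1" "deg ?K ends w2 = 1" "deg ?K ends w3 = 1"
        using leaf[OF g(1) kempe_chain_self] leaf[OF g(2)] leaf[OF g(3)] both by auto
    qed
  qed
  have "?c g1 = 3 - c0 g1" using kempe_chain_self unfolding kempe_swap_def by metis
  moreover have "?c g2 = c0 g1 \<or> ?c g3 = c0 g1" using not_both cg unfolding kempe_swap_def by auto
  moreover have "3 - c0 g1 \<noteq> c0 g1" using c12 by auto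
  ultimately show ?thesis using good' g by (intro exI[of _ ?c]) auto
qed

section \<open>Reductions\<close>

lemma deg_avoiding_le_pred:
  assumes fin: "finite E" and e: "e \<in> E" "p \<in> ends e" "u \<in> ends e"
  shows "deg (edges_avoiding E ends {u}) ends p \<le> deg E ends p - 1"
proof -
  have "edges_at (edges_avoiding E ends {u}) ends p \<subseteq> edges_at E ends p - {e}" using e by auto
  moreover have "card (edges_at E ends p - {e}) = deg E ends p - 1"
    using e fin by (simp add: finite_edges_at)
  ultimately show ?thesis using card_mono finite_edges_at[OF fin] by (metis finite_Diff)
qed

lemma admissible_pins_avoiding:
  assumes irr: "irregular_subcubic E ends" and adm: "admissible_pins E ends D"
  shows "admissible_pins (edges_avoiding E ends S) ends D"
  unfolding admissible_pins_def
proof (intro conjI ballI allI impI)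
  have fin: "finite E" by (rule irregular_subcubic_finite[OF irr])
  fix p assume "p \<in> D"
  then show "deg (edges_avoiding E ends S) ends p \<le> 1"
    using admissible_pins_deg[OF adm] deg_avoiding_le[OF fin, of ends S p] by fastforce
next
  have fin: "finite E" by (rule irregular_subcubic_finite[OF irr])
  fix v assume v: "deg (edges_avoiding E ends S) ends v = 3"
  then have "deg E ends v = 3"
    using deg_avoiding_le[OF fin, of ends S v] irregular_subcubic_deg_le3[OF irr, of v] by linarith
  moreover have
    "card (pinned_edges_at (edges_avoiding E ends S) ends D v) \<le> card (pinned_edges_at E ends D v)"
    by (rule card_mono) (use fin in \<open>auto simp: pinned_edges_at_def\<close>)
  ultimately show "card (pinned_edges_at (edges_avoiding E ends S) ends D v) \<le> 2"
    using admissible_pins_deg3[OF adm] by fastforce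
qed

lemma admissible_pins_remove_vertex:
  assumes irr: "irregular_subcubic E ends" and adm: "admissible_pins E ends D"
    and low: "\<forall>x\<in>nbrs E ends u. deg E ends x \<le> 2"
    and safe: "\<forall>v. deg E ends v = 3 \<longrightarrow> v \<noteq> u \<longrightarrow>
                 card (pinned_edges_at E ends (D \<union> nbrs E ends u) v) \<le> 2"
  shows "admissible_pins (edges_avoiding E ends {u}) ends (D \<union> nbrs E ends u)"
  unfolding admissible_pins_def
proof (intro conjI ballI allI impI)
  have fin: "finite E" by (rule irregular_subcubic_finite[OF irr])
  fix p assume p: "p \<in> D \<union> nbrs E ends u"
  show "deg (edges_avoiding E ends {u}) ends p \<le> 1"
  proof (cases "p \<in> D")
    case True
    then show ?thesis
      using admissible_pins_deg[OF adm] deg_avoiding_le[OF fin, of ends "{u}" p] by fastforce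
  next
    case False
    then have pn: "p \<in> nbrs E ends u" using p by auto
    then obtain e where "e \<in> E" "u \<in> ends e" "p \<in> ends e" unfolding nbrs_iff by auto
    then show ?thesis using deg_avoiding_le_pred[OF fin] low pn by fastforce
  qed
next
  have fin: "finite E" by (rule irregular_subcubic_finite[OF irr])
  fix v assume v: "deg (edges_avoiding E ends {u}) ends v = 3"
  have v3: "deg E ends v = 3"
    using v deg_avoiding_le[OF fin, of ends "{u}" v] irregular_subcubic_deg_le3[OF irr, of v]
      by linarith
  have eq: "edges_at (edges_avoiding E ends {u}) ends v = edges_at E ends v"
    by (rule card_subset_eq[OF finite_edges_at[OF fin] edges_at_avoiding_subset]) (use v v3 in simp)
  have "v \<noteq> u"
  proof
    assume "v = u"
    then have "edges_at (edges_avoiding E ends {u}) ends v = {}" by auto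
    then show False using v by simp
  qed
  then show "card (pinned_edges_at (edges_avoiding E ends {u}) ends (D \<union> nbrs E ends u) v) \<le> 2"
    using safe v3 eq unfolding pinned_edges_at_def by simp
qed

lemma admissible_pins_remove_vertex_max_deg2:
  assumes irr: "irregular_subcubic E ends" and adm: "admissible_pins E ends D"
    and low: "\<forall>v. deg E ends v \<le> 2"
  shows "admissible_pins (edges_avoiding E ends {u}) ends (D \<union> nbrs E ends u)"
proof (rule admissible_pins_remove_vertex[OF irr adm])
  have "deg E ends v \<noteq> 3" for v using low[rule_format, of v] by linarith
  then show "\<forall>v. deg E ends v = 3 \<longrightarrow> v \<noteq> u \<longrightarrow>
               card (pinned_edges_at E ends (D \<union> nbrs E ends u) v) \<le> 2" by blast
qed (use low in blast)

lemma good_coloring_pinned_seen: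
  assumes fin: "finite E" and adm: "admissible_pins E ends D" and good: "good_coloring E ends D c"
    and p: "p \<in> D"
  shows "c ` edges_at E ends p \<in> {{}, {1}, {2}}"
proof (rule card_le1_cases[OF admissible_pins_deg[OF adm p] finite_edges_at[OF fin]])
  fix g assume "edges_at E ends p = {g}"
  then show ?thesis using good_coloring_pinned_12[OF good p] by auto
qed simp

lemma pinned_seen_cases: "X \<in> {{}, {1 :: nat}, {2}} \<Longrightarrow> X \<subseteq> {1,2} \<and> finite X \<and> card X \<le> 1"
  by auto

lemma two_colors_avoiding:
  fixes F G :: "nat set"
  assumes "finite F" "card F \<le> 1" "finite G" "card G \<le> 1" "\<not> (F \<noteq> {} \<and> F = G)"
  obtains s t where "{s, t} = {1, 2}" "s \<notin> F" "t \<notin> G"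
proof (cases "1 \<in> F \<or> 2 \<in> G")
  case True
  have F: "F = {x}" if "x \<in> F" for x using card_le1_member[OF assms(2,1) that] .
  have G: "G = {x}" if "x \<in> G" for x using card_le1_member[OF assms(4,3) that] .
  have "2 \<notin> F" "1 \<notin> G" using True F G assms(5) by (metis insert_not_empty numeral_eq_one_iff
      semiring_norm(85) singleton_inject)+
  then show ?thesis using that[of 2 1] by auto
next
  case False
  then show ?thesis using that[of 1 2] by auto
qed

lemma good_coloring_extend_at_vertex_12:
  fixes \<sigma> c' :: "'e \<Rightarrow> nat"
  assumes irr: "irregular_subcubic E ends"
    and old: "good_coloring (edges_avoiding E ends {u}) ends D' c'"
    and pins: "D - {u} \<subseteq> D'"
    and low: "\<And>a. a \<in> edges_at E ends u \<Longrightarrow> deg E ends (other_end ends u a) \<le> 2"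
    and range: "\<And>a. a \<in> edges_at E ends u \<Longrightarrow> \<sigma> a \<in> {1,2}"
    and inj: "inj_on \<sigma> (edges_at E ends u)"
    and near: "\<And>a. a \<in> edges_at E ends u \<Longrightarrow>
                 \<sigma> a \<notin> c' ` edges_at (edges_avoiding E ends {u}) ends (other_end ends u a)"
    and deg3: "deg E ends u = 3 \<Longrightarrow> {1,2} \<subseteq> \<sigma> ` edges_at E ends u"
  shows "\<exists>c. good_coloring E ends D c"
  using good_coloring_extend_at_vertex[OF irr old pins low _ inj near _ _ _ deg3] range by fastforce

lemma card_le2_cases:
  assumes "card A \<le> 2" "finite A"
  obtains "A = {}" | a where "A = {a}" | a b where "A = {a, b}" "a \<noteq> b"
  using assms by (metis card_2_iff card_le1_cases le_Suc_eq numeral_2_eq_2 One_nat_def)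

text \<open>Both neighbors of \<open>w\<close> already see the same matching color \<open>k\<close>: the edge \<open>a\<close> takes a
  color 3 or 4 that is free near its other end, the edge \<open>b\<close> takes \<open>3 - k\<close>.\<close>
lemma good_coloring_extend_blocked_pair:
  fixes E :: "'e set" and ends :: "'e \<Rightarrow> 'v set" and w :: 'v and c' :: "'e \<Rightarrow> nat"
  defines "E' \<equiv> edges_avoiding E ends {w}" and "x \<equiv> other_end ends w"
  assumes irr: "irregular_subcubic E ends" and adm: "admissible_pins E ends D"
    and low: "\<forall>v. deg E ends v \<le> 2"
    and old: "good_coloring E' ends (D \<union> nbrs E ends w) c'"
    and A: "edges_at E ends w = {a, b}" "a \<noteq> b"
    and blocked: "c' ` edges_at E' ends (x a) \<noteq> {}"
      "c' ` edges_at E' ends (x a) = c' ` edges_at E' ends (x b)"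
  shows "\<exists>c. good_coloring E ends D c"
proof -
  have fin: "finite E" by (rule irregular_subcubic_finite[OF irr])
  have irr': "irregular_subcubic E' ends" unfolding E'_def
    by (rule irregular_subcubic_avoiding[OF irr])
  have adm': "admissible_pins E' ends (D \<union> nbrs E ends w)"
    unfolding E'_def by (rule admissible_pins_remove_vertex_max_deg2[OF irr adm low])
  have aw: "a \<in> edges_at E ends w" using A by simp
  have xa: "ends a = {w, x a}" using other_end[OF irr aw] unfolding x_def by simp
  have xaD: "x a \<in> D \<union> nbrs E ends w" using other_end_in_nbrs[OF irr aw] unfolding x_def by simp
  obtain ga where ga: "edges_at E' ends (x a) = {ga}"
    using card_le1_cases[OF admissible_pins_deg[OF adm' xaD] finite_edges_at] blocked(1)
      irregular_subcubic_finite[OF irr'] by (metis image_empty)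
  define k where "k = c' ga"
  have k: "k \<in> {1,2}" using good_coloring_pinned_12[OF old xaD] ga unfolding k_def by simp
  have Fb: "c' ` edges_at E' ends (x b) = {k}" using blocked(2) ga unfolding k_def by simp
  obtain d where d: "d \<in> {3,4}" "d \<notin> c' ` edges_near E' ends (x a)"
    using good_coloring_free_color_near_pin[OF irr' old xaD admissible_pins_deg[OF adm' xaD]]
      by blast
  have "x a \<notin> D"
  proof -
    have "ga \<in> edges_at E' ends (x a)" using ga by simp
    then have "ga \<in> E" "x a \<in> ends ga" "w \<notin> ends ga" unfolding E'_def by auto
    then have "{a, ga} \<subseteq> edges_at E ends (x a)" "a \<noteq> ga" using aw xa by auto
    then have "card {a, ga} \<le> deg E ends (x a)" by (intro card_mono finite_edges_at[OF fin])
    then show ?thesis using admissible_pins_notin[OF adm] \<open>a \<noteq> ga\<close> by simp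
  qed
  moreover have "w \<notin> D" using admissible_pins_notin[OF adm] A by simp
  ultimately have a_free: "ends a \<inter> D = {}" using xa by auto
  define \<sigma> where "\<sigma> e = (if e = a then d else 3 - k)" for e
  have "good_coloring E ends D (\<lambda>e. if e \<in> E' then c' e else \<sigma> e)"
    unfolding E'_def
  proof (rule good_coloring_extend_at_vertex[OF irr old[unfolded E'_def]])
    show "inj_on \<sigma> (edges_at E ends w)" using A d k unfolding \<sigma>_def by auto
    show "\<sigma> a' \<notin> c' ` edges_at (edges_avoiding E ends {w}) ends (other_end ends w a')"
      if "a' \<in> edges_at E ends w" for a'
    proof (cases "a' = a")
      case True
      then show ?thesis using d(2) edges_at_subset_near[of E' ends "x a"]
        unfolding \<sigma>_def E'_def x_def by auto
    next
      case False
      then have "a' = b" using that A by auto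
      moreover have "3 - k \<noteq> k" using k by auto
      ultimately show ?thesis using Fb False unfolding \<sigma>_def E'_def x_def by simp
    qed
    have \<sigma>: "\<sigma> a = d" "\<sigma> b = 3 - k" using A(2) unfolding \<sigma>_def by auto
    have only_a: "a' = a" if "a' \<in> edges_at E ends w" "3 \<le> \<sigma> a'" for a'
      using that A \<sigma> k by auto
    show "deg E ends (other_end ends w a') \<le> 2" for a' using low by blast
    show "\<sigma> a' \<in> {1,2,3,4}" for a' using d k unfolding \<sigma>_def by auto
    show "\<sigma> a' \<notin> c' ` edges_near (edges_avoiding E ends {w}) ends (other_end ends w a')"
      if "a' \<in> edges_at E ends w" "3 \<le> \<sigma> a'" for a'
      using only_a[OF that] \<sigma> d(2) unfolding E'_def x_def by simp
    show "\<sigma> a' \<notin> c' ` edges_at (edges_avoiding E ends {w}) ends (other_end ends w b')"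
      if "a' \<in> edges_at E ends w" "b' \<in> edges_at E ends w" "a' \<noteq> b'" "3 \<le> \<sigma> a'" for a' b'
    proof -
      have "a' = a" "b' = b" using only_a[OF that(1,4)] that(2,3) A by auto
      then show ?thesis using \<sigma> Fb d(1) k unfolding E'_def x_def by auto
    qed
    show "\<sigma> a' \<le> 2" if "a' \<in> edges_at E ends w" "ends a' \<inter> D \<noteq> {}" for a'
      using that a_free only_a by fastforce
    show "{1,2} \<subseteq> \<sigma> ` edges_at E ends w" if "deg E ends w = 3" using that A by simp
  qed auto
  then show ?thesis by blast
qed

lemma good_coloring_extend_max_deg2:
  assumes irr: "irregular_subcubic E ends" and adm: "admissible_pins E ends D"
    and low: "\<forall>v. deg E ends v \<le> 2"
    and old: "good_coloring (edges_avoiding E ends {w}) ends (D \<union> nbrs E ends w) c'"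
  shows "\<exists>c. good_coloring E ends D c"
proof -
  define E' where "E' = edges_avoiding E ends {w}"
  define x where "x = other_end ends w"
  define F where "F a = c' ` edges_at E' ends (x a)" for a
  have fin: "finite E" by (rule irregular_subcubic_finite[OF irr])
  have adm': "admissible_pins E' ends (D \<union> nbrs E ends w)"
    unfolding E'_def by (rule admissible_pins_remove_vertex_max_deg2[OF irr adm low])
  have xD: "x a \<in> D \<union> nbrs E ends w" if "a \<in> edges_at E ends w" for a
    using other_end_in_nbrs[OF irr that] unfolding x_def by simp
  have F: "F a \<in> {{}, {1}, {2}}" if "a \<in> edges_at E ends w" for a
    using good_coloring_pinned_seen[OF _ adm' old[folded E'_def] xD[OF that]] fin
    unfolding F_def E'_def by (simp add: edges_avoiding_def)
  have pins: "D - {w} \<subseteq> D \<union> nbrs E ends w" by auto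
  note extend12 = good_coloring_extend_at_vertex_12[OF irr old pins low[rule_format]]
  show ?thesis
  proof (rule card_le2_cases[OF low[rule_format] finite_edges_at[OF fin]])
    assume "edges_at E ends w = {}"
    then show ?thesis using extend12[of "\<lambda>_. 1"] by simp
  next
    fix a assume A: "edges_at E ends w = {a}"
    define s where "s = (if F a = {1} then 2 else 1 :: nat)"
    have "s \<notin> F a" using F[of a] A unfolding s_def by auto
    then show ?thesis using extend12[of "\<lambda>_. s"] A unfolding s_def F_def E'_def x_def by auto
  next
    fix a b assume A: "edges_at E ends w = {a, b}" "a \<noteq> b"
    show ?thesis
    proof (cases "F a \<noteq> {} \<and> F a = F b")
      case False
      have "finite (F a)" "card (F a) \<le> 1" "finite (F b)" "card (F b) \<le> 1"
        using F[of a] F[of b] A by auto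
      then obtain s t where st: "{s, t} = {1, 2}" "s \<notin> F a" "t \<notin> F b"
        using two_colors_avoiding False by metis
      define \<sigma> where "\<sigma> e = (if e = a then s else t)" for e
      show ?thesis
      proof (rule extend12[of \<sigma>])
        show "inj_on \<sigma> (edges_at E ends w)" using A st(1) unfolding \<sigma>_def by auto
        show "\<sigma> a' \<in> {1,2}" for a' using st(1) unfolding \<sigma>_def by auto
        show "\<sigma> a' \<notin> c' ` edges_at (edges_avoiding E ends {w}) ends (other_end ends w a')"
          if "a' \<in> edges_at E ends w" for a'
          using that A st unfolding \<sigma>_def F_def E'_def x_def by auto
        show "{1,2} \<subseteq> \<sigma> ` edges_at E ends w" using A st(1) unfolding \<sigma>_def by auto
      qed
    next
      case True
      then show ?thesis
        using good_coloring_extend_blocked_pair[OF irr adm low old A] unfolding F_def E'_def x_def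
          by auto
    qed
  qed
qed

definition proper_subgraphs_colorable :: "'e set \<Rightarrow> ('e \<Rightarrow> 'v set) \<Rightarrow> bool" where
  "proper_subgraphs_colorable E ends \<longleftrightarrow> (\<forall>E'\<subset>E. \<forall>D'. irregular_subcubic E' ends \<longrightarrow>
     admissible_pins E' ends D' \<longrightarrow> (\<exists>c. good_coloring E' ends D' c))"

lemma proper_subgraphs_colorable_avoiding:
  assumes "proper_subgraphs_colorable E ends" "irregular_subcubic E ends"
    and "admissible_pins (edges_avoiding E ends {u}) ends D'" "edges_at E ends u \<noteq> {}"
  obtains c where "good_coloring (edges_avoiding E ends {u}) ends D' c"
proof -
  obtain e where "e \<in> E" "u \<in> ends e" using assms(4) by auto
  then have "e \<notin> edges_avoiding E ends {u}" by simp
  moreover have "edges_avoiding E ends {u} \<subseteq> E" by auto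
  ultimately have "edges_avoiding E ends {u} \<subset> E" using \<open>e \<in> E\<close> by blast
  then show ?thesis
    using assms(1,3) irregular_subcubic_avoiding[OF assms(2)] that
    unfolding proper_subgraphs_colorable_def by blast
qed

lemma deg3_edges_at_nonempty: "deg E ends u = 3 \<Longrightarrow> edges_at E ends u \<noteq> {}"
  by auto

lemma three_edges_choose_free:
  fixes F :: "'a \<Rightarrow> nat set"
  assumes A: "card A = 3"
    and P: "\<forall>a\<in>A. P a \<longrightarrow> F a = {}" "\<exists>a\<in>A. \<not> P a"
    and unequal: "\<forall>a\<in>A. \<not> (F a \<noteq> {} \<and> (\<forall>b\<in>A. F b = F a))"
  obtains a b b' where "A = {a, b, b'}" "a \<noteq> b" "a \<noteq> b'" "b \<noteq> b'" "\<not> P a"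
    "\<not> (F b \<noteq> {} \<and> F b = F b')"
proof -
  obtain a1 a2 a3 where A3: "A = {a1, a2, a3}" "a1 \<noteq> a2" "a1 \<noteq> a3" "a2 \<noteq> a3"
    using A card_3_iff by metis
  have unequal3: "\<not> (F a1 \<noteq> {} \<and> F a1 = F a2 \<and> F a2 = F a3)"
  proof
    assume h: "F a1 \<noteq> {} \<and> F a1 = F a2 \<and> F a2 = F a3"
    then have "\<forall>b\<in>A. F b = F a1" using A3(1) by auto
    then show False using unequal h A3(1) by blast
  qed
  \<comment> \<open>if every unpinned edge saw equal colors at the other two, all three would see the same color\<close>
  consider "\<not> P a1 \<and> \<not> (F a2 \<noteq> {} \<and> F a2 = F a3)" | "\<not> P a2 \<and> \<not> (F a1 \<noteq> {} \<and> F a1 = F a3)"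
    | "\<not> P a3 \<and> \<not> (F a1 \<noteq> {} \<and> F a1 = F a2)"
    using A3 P unequal3 by auto
  then show ?thesis
  proof cases
    case 1 then show ?thesis using that[of a1 a2 a3] A3 by auto
  next
    case 2 then show ?thesis using that[of a2 a1 a3] A3 by auto
  next
    case 3 then show ?thesis using that[of a3 a1 a2] A3 by auto
  qed
qed

lemma admissible_pins_unpinned_edge:
  assumes adm: "admissible_pins E ends D" and hu: "deg E ends u = 3"
  obtains a where "a \<in> edges_at E ends u" "ends a \<inter> D = {}"
proof -
  have "pinned_edges_at E ends D u \<noteq> edges_at E ends u"
    using admissible_pins_deg3[OF adm hu] hu by auto
  then have "\<not> edges_at E ends u \<subseteq> pinned_edges_at E ends D u" by auto
  then obtain a where "a \<in> edges_at E ends u" "a \<notin> pinned_edges_at E ends D u" by blast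
  then show ?thesis using that by simp
qed

lemma good_coloring_extend_at_deg3_vertex:
  fixes E :: "'e set" and ends :: "'e \<Rightarrow> 'v set" and u :: 'v and c' :: "'e \<Rightarrow> nat"
  defines "E' \<equiv> edges_avoiding E ends {u}" and "w \<equiv> other_end ends u"
  assumes irr: "irregular_subcubic E ends" and hu: "deg E ends u = 3"
    and old: "good_coloring E' ends D' c'" and pins: "D - {u} \<subseteq> D'"
    and A: "edges_at E ends u = {a, b, b'}" "a \<noteq> b" "a \<noteq> b'" "b \<noteq> b'"
    and a_free: "ends a \<inter> D = {}"
    and d: "d \<in> {3,4}" "d \<notin> c' ` edges_near E' ends (w a)"
      "d \<notin> c' ` edges_at E' ends (w b)" "d \<notin> c' ` edges_at E' ends (w b')"
    and st: "{s, t} = {1, 2}" "s \<notin> c' ` edges_at E' ends (w b)" "t \<notin> c' ` edges_at E' ends (w b')"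
  shows "\<exists>c. good_coloring E ends D c"
proof -
  let ?A = "edges_at E ends u"
  define \<sigma> where "\<sigma> e = (if e = a then d else if e = b then s else t)" for e
  have \<sigma>: "\<sigma> a = d" "\<sigma> b = s" "\<sigma> b' = t" using A unfolding \<sigma>_def by auto
  have st12: "s \<in> {1,2}" "t \<in> {1,2}" using st(1) by (metis insertI1, metis insertI1 insert_commute)
  have cases: "e = a \<or> e = b \<or> e = b'" if "e \<in> ?A" for e using that A(1) by auto
  have only_a: "e = a" if "e \<in> ?A" "3 \<le> \<sigma> e" for e using cases[OF that(1)] that(2) \<sigma> st12 by auto
  have "good_coloring E ends D (\<lambda>e. if e \<in> E' then c' e else \<sigma> e)"
    unfolding E'_def
  proof (rule good_coloring_extend_at_vertex[OF irr old[unfolded E'_def] pins])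
    show "deg E ends (other_end ends u e) \<le> 2" if "e \<in> ?A" for e
      using deg_nbr_of_deg3[OF irr hu other_end_in_nbrs[OF irr that]] .
    show "\<sigma> e \<in> {1,2,3,4}" for e using d(1) st12 unfolding \<sigma>_def by auto
    show "inj_on \<sigma> ?A" using A d(1) st(1) st12 \<sigma> by auto
    show "\<sigma> e \<notin> c' ` edges_at (edges_avoiding E ends {u}) ends (other_end ends u e)"
      if "e \<in> ?A" for e
      using cases[OF that] \<sigma> st d(2) edges_at_subset_near[of E' ends "w a"] unfolding E'_def w_def
      by auto
    show "\<sigma> e \<notin> c' ` edges_near (edges_avoiding E ends {u}) ends (other_end ends u e)"
      if "e \<in> ?A" "3 \<le> \<sigma> e" for e
      using only_a[OF that] d(2) \<sigma> unfolding E'_def w_def by simp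
    show "\<sigma> e \<notin> c' ` edges_at (edges_avoiding E ends {u}) ends (other_end ends u e')"
      if "e \<in> ?A" "e' \<in> ?A" "e \<noteq> e'" "3 \<le> \<sigma> e" for e e'
      using only_a[OF that(1,4)] cases[OF that(2)] that(3) \<sigma> d(3,4) unfolding E'_def w_def by auto
    show "\<sigma> e \<le> 2" if "e \<in> ?A" "ends e \<inter> D \<noteq> {}" for e
      using cases[OF that(1)] that(2) a_free \<sigma> st12 by auto
    show "{1,2} \<subseteq> \<sigma> ` ?A" using A(1) \<sigma> st(1) by auto
  qed
  then show ?thesis by blast
qed

lemma safe_vertex_separated_coloring:
  fixes E :: "'e set" and ends :: "'e \<Rightarrow> 'v set" and u :: 'v and D :: "'v set"
  defines "E' \<equiv> edges_avoiding E ends {u}" and "D' \<equiv> D \<union> nbrs E ends u"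
    and "w \<equiv> other_end ends u"
  assumes irr: "irregular_subcubic E ends" and adm: "admissible_pins E ends D"
    and IH: "proper_subgraphs_colorable E ends" and hu: "deg E ends u = 3"
    and safe: "\<forall>v. deg E ends v = 3 \<longrightarrow> v \<noteq> u \<longrightarrow>
                 card (pinned_edges_at E ends (D \<union> nbrs E ends u) v) \<le> 2"
  obtains c' where "good_coloring E' ends D' c'"
    "\<forall>a\<in>edges_at E ends u. \<not> (c' ` edges_at E' ends (w a) \<noteq> {} \<and>
        (\<forall>b\<in>edges_at E ends u. c' ` edges_at E' ends (w b) = c' ` edges_at E' ends (w a)))"
proof -
  let ?A = "edges_at E ends u"
  have fin: "finite E" by (rule irregular_subcubic_finite[OF irr])
  have irr': "irregular_subcubic E' ends" unfolding E'_def
    by (rule irregular_subcubic_avoiding[OF irr])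
  have wa: "w a \<in> D'" "a \<in> edges_at E ends (w a)" "a \<notin> E'" "deg E ends (w a) \<le> 2"
    if "a \<in> ?A" for a
    using other_end[OF irr that] other_end_in_nbrs[OF irr that] that
      deg_nbr_of_deg3[OF irr hu other_end_in_nbrs[OF irr that]]
    unfolding w_def D'_def E'_def by auto
  have adm': "admissible_pins E' ends D'"
    unfolding E'_def D'_def
    by (rule admissible_pins_remove_vertex[OF irr adm _ safe])
      (use deg_nbr_of_deg3[OF irr hu] in blast)
  obtain c0 where good0: "good_coloring E' ends D' c0"
    using proper_subgraphs_colorable_avoiding[OF IH irr adm'[unfolded E'_def]
        deg3_edges_at_nonempty[OF hu]]
    unfolding E'_def .
  obtain a1 a2 a3 where A: "?A = {a1, a2, a3}" "a1 \<noteq> a2" "a1 \<noteq> a3" "a2 \<noteq> a3"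
    using hu card_3_iff by metis
  have aA: "a1 \<in> ?A" "a2 \<in> ?A" "a3 \<in> ?A" using A by auto
  \<comment> \<open>two edges at \<open>u\<close> to the same neighbor leave that neighbor isolated\<close>
  have shared: "edges_at E' ends (w a) = {}" if "a \<in> ?A" "b \<in> ?A" "a \<noteq> b" "w a = w b" for a b
  proof -
    have "edges_at E ends (w a) = {a, b}"
      using card_le2_pair[OF wa(4)[OF that(1)] finite_edges_at[OF fin]] wa(2) that by metis
    moreover have "edges_at E' ends (w a) \<subseteq> edges_at E ends (w a) - {a, b}"
      using wa(3) that(1,2) unfolding E'_def by auto
    ultimately show ?thesis by auto
  qed
  have "w a1 \<noteq> w a2 \<and> w a1 \<noteq> w a3 \<and> w a2 \<noteq> w a3"
    if "edges_at E' ends (w a1) \<noteq> {}" "edges_at E' ends (w a2) \<noteq> {}" "edges_at E' ends (w a3) \<noteq> {}"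
    using shared[OF aA(1,2) A(2)] shared[OF aA(1,3) A(3)] shared[OF aA(2,3) A(4)] that by auto
  then obtain c' where good': "good_coloring E' ends D' c'" and unequal:
    "\<not> (c' ` edges_at E' ends (w a1) \<noteq> {} \<and>
        c' ` edges_at E' ends (w a1) = c' ` edges_at E' ends (w a2) \<and>
        c' ` edges_at E' ends (w a2) = c' ` edges_at E' ends (w a3))"
    using good_coloring_separate_three_pins[OF irr' adm' good0 wa(1)[OF aA(1)] wa(1)[OF aA(2)]
        wa(1)[OF aA(3)]] by blast
  let ?F = "\<lambda>a. c' ` edges_at E' ends (w a)"
  have "\<not> (?F a \<noteq> {} \<and> (\<forall>b\<in>?A. ?F b = ?F a))" if "a \<in> ?A" for a
  proof
    assume h: "?F a \<noteq> {} \<and> (\<forall>b\<in>?A. ?F b = ?F a)"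
    then have "?F a1 = ?F a" "?F a2 = ?F a" "?F a3 = ?F a" using aA by auto
    then show False using unequal h by simp
  qed
  then show ?thesis using that good' by blast
qed

lemma reduce_safe_vertex:
  assumes irr: "irregular_subcubic E ends" and adm: "admissible_pins E ends D"
    and IH: "proper_subgraphs_colorable E ends" and hu: "deg E ends u = 3"
    and safe: "\<forall>v. deg E ends v = 3 \<longrightarrow> v \<noteq> u \<longrightarrow>
                 card (pinned_edges_at E ends (D \<union> nbrs E ends u) v) \<le> 2"
  shows "\<exists>c. good_coloring E ends D c"
proof -
  define E' where "E' = edges_avoiding E ends {u}"
  define D' where "D' = D \<union> nbrs E ends u"
  define w where "w = other_end ends u"
  let ?A = "edges_at E ends u"
  have irr': "irregular_subcubic E' ends" unfolding E'_def
    by (rule irregular_subcubic_avoiding[OF irr])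
  have uD: "u \<notin> D" using admissible_pins_notin[OF adm] hu by simp
  have wa: "ends a = {u, w a}" "w a \<in> D'" "a \<in> edges_at E ends (w a)" "a \<notin> E'" if "a \<in> ?A" for a
    using other_end[OF irr that] other_end_in_nbrs[OF irr that] that
    unfolding w_def D'_def E'_def by auto
  have adm': "admissible_pins E' ends D'"
    unfolding E'_def D'_def
    by (rule admissible_pins_remove_vertex[OF irr adm _ safe])
      (use deg_nbr_of_deg3[OF irr hu] in blast)
  obtain c' where good': "good_coloring E' ends D' c'" and unequal:
    "\<forall>a\<in>?A. \<not> (c' ` edges_at E' ends (w a) \<noteq> {} \<and>
        (\<forall>b\<in>?A. c' ` edges_at E' ends (w b) = c' ` edges_at E' ends (w a)))"
    using safe_vertex_separated_coloring[OF irr adm IH hu safe] unfolding E'_def D'_def w_def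
      by blast
  define F where "F a = c' ` edges_at E' ends (w a)" for a
  have F: "F a \<in> {{}, {1}, {2}}" if "a \<in> ?A" for a
    using good_coloring_pinned_seen[OF irregular_subcubic_finite[OF irr'] adm' good' wa(2)[OF that]]
    unfolding F_def .
  have P: "\<forall>a\<in>?A. w a \<in> D \<longrightarrow> F a = {}"
  proof (intro ballI impI)
    fix a assume a: "a \<in> ?A" "w a \<in> D"
    have "edges_at E ends (w a) = {a}"
      by (rule admissible_pins_single[OF irr adm a(2) wa(3)[OF a(1)]])
    then have "edges_at E' ends (w a) = {}" using wa(4)[OF a(1)] unfolding E'_def by auto
    then show "F a = {}" unfolding F_def by simp
  qed
  obtain a0 where "a0 \<in> ?A" "ends a0 \<inter> D = {}" by (rule admissible_pins_unpinned_edge[OF adm hu])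
  then have "\<exists>a\<in>?A. w a \<notin> D" using wa(1) by auto
  then obtain a b b' where split: "?A = {a, b, b'}" "a \<noteq> b" "a \<noteq> b'" "b \<noteq> b'" "w a \<notin> D"
    "\<not> (F b \<noteq> {} \<and> F b = F b')"
    using three_edges_choose_free[OF hu P] unequal unfolding F_def by blast
  have aA: "a \<in> ?A" "b \<in> ?A" "b' \<in> ?A" using split by auto
  obtain d where d: "d \<in> {3,4}" "d \<notin> c' ` edges_near E' ends (w a)"
    using good_coloring_free_color_near_pin[OF irr' good' wa(2)[OF aA(1)]
        admissible_pins_deg[OF adm' wa(2)[OF aA(1)]]] by blast
  have Fb: "F b \<subseteq> {1,2} \<and> finite (F b) \<and> card (F b) \<le> 1"
    "F b' \<subseteq> {1,2} \<and> finite (F b') \<and> card (F b') \<le> 1"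
    using pinned_seen_cases[OF F[OF aA(2)]] pinned_seen_cases[OF F[OF aA(3)]] by simp_all
  then obtain s t where st: "{s, t} = {1, 2}" "s \<notin> F b" "t \<notin> F b'"
    using two_colors_avoiding split(6) by metis
  show ?thesis
  proof (rule good_coloring_extend_at_deg3_vertex[OF irr hu good'[unfolded E'_def] _ split(1-4)])
    show "D - {u} \<subseteq> D'" unfolding D'_def by auto
    show "ends a \<inter> D = {}" using wa(1)[OF aA(1)] uD split(5) by auto
    show "d \<in> {3,4}" "d \<notin> c' ` edges_near (edges_avoiding E ends {u}) ends (other_end ends u a)"
      using d unfolding E'_def w_def by auto
    have "d \<notin> F b" "d \<notin> F b'" using Fb d(1) by auto
    then show "d \<notin> c' ` edges_at (edges_avoiding E ends {u}) ends (other_end ends u b)"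
      "d \<notin> c' ` edges_at (edges_avoiding E ends {u}) ends (other_end ends u b')"
      unfolding F_def E'_def w_def by simp_all
    show "s \<notin> c' ` edges_at (edges_avoiding E ends {u}) ends (other_end ends u b)"
      "t \<notin> c' ` edges_at (edges_avoiding E ends {u}) ends (other_end ends u b')"
      using st(2,3) unfolding F_def E'_def w_def by simp_all
  qed (rule st(1))
qed

lemma good_coloring_seen_differ:
  assumes irr: "irregular_subcubic E ends" and good: "good_coloring E ends D c"
    and sub: "edges_at E ends x \<subseteq> edges_at E ends y" "edges_at E ends x' \<subseteq> edges_at E ends y"
    and ne: "x \<noteq> x'" "x \<noteq> y" "x' \<noteq> y"
  shows "\<not> (c ` edges_at E ends x \<noteq> {} \<and> c ` edges_at E ends x = c ` edges_at E ends x')"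
proof
  assume same: "c ` edges_at E ends x \<noteq> {} \<and> c ` edges_at E ends x = c ` edges_at E ends x'"
  then obtain g where g: "g \<in> edges_at E ends x" by blast
  then obtain g' where g': "g' \<in> edges_at E ends x'" "c g' = c g"
    using same by (metis imageE imageI)
  have gy: "g \<in> edges_at E ends y" "g' \<in> edges_at E ends y" using g g' sub by auto
  have "g \<noteq> g'"
  proof
    assume "g = g'"
    then have "{x, x', y} \<subseteq> ends g" using g g' gy by auto
    moreover have "card {x, x', y} = 3" using ne by simp
    moreover have two: "card (ends g) = 2" using irregular_subcubic_two_ends[OF irr] g by simp
    then have "finite (ends g)" by (metis card.infinite zero_neq_numeral)
    ultimately show False using card_mono[of "ends g" "{x, x', y}"] two by simp
  qed
  then have "ladj ends g g'" using gy by (auto intro: ladjI)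
  then have "c g \<noteq> c g'" using packing_coloring_ladj[OF good_coloring_packing[OF good]] gy by simp
  then show False using g'(2) by simp
qed

lemma edges_near_subset_edges_at:
  assumes irr: "irregular_subcubic E ends" and sub: "edges_at E ends x \<subseteq> edges_at E ends y"
    and xy: "x \<noteq> y"
  shows "edges_near E ends x \<subseteq> edges_at E ends y"
proof
  fix f assume "f \<in> edges_near E ends x"
  then obtain g z where g: "g \<in> edges_at E ends x" "z \<in> ends g" "f \<in> edges_at E ends z"
    unfolding edges_near_iff by blast
  have "ends g = {x, other_end ends x g}" by (rule other_end(1)[OF irr g(1)])
  moreover have "y \<in> ends g" "y \<noteq> x" using g(1) sub xy by auto
  ultimately have "ends g = {x, y}" by auto
  then show "f \<in> edges_at E ends y" using g(2,3) sub by auto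
qed

lemma card_3_elemE:
  assumes "card A = 3" "a \<in> A"
  obtains b b' where "A = {a, b, b'}" "a \<noteq> b" "a \<noteq> b'" "b \<noteq> b'"
proof -
  have "card (A - {a}) = 2" using assms by (simp add: card.infinite)
  then obtain b b' where B: "A - {a} = {b, b'}" "b \<noteq> b'" using card_2_iff[THEN iffD1] by blast
  have "b \<in> A - {a}" "b' \<in> A - {a}" using B(1) by auto
  moreover have "A = insert a (A - {a})" using assms(2) by blast
  ultimately show ?thesis using that B by auto
qed

lemma card_image_edges_at_le1:
  assumes "finite E" "deg E ends x \<le> 1"
  shows "finite (c ` edges_at E ends x)" "card (c ` edges_at E ends x) \<le> 1"
proof -
  show "finite (c ` edges_at E ends x)" by (rule finite_imageI[OF finite_edges_at[OF assms(1)]])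
  show "card (c ` edges_at E ends x) \<le> 1"
    using card_image_le[OF finite_edges_at[OF assms(1)], of c ends x] assms(2) by linarith
qed

text \<open>No pins are added here: \<open>y\<close> sees 1, 2 and a color \<open>x\<close> from 3 and 4, and \<open>7 - x\<close> is then
  free near every neighbor of \<open>u\<close>.\<close>
lemma reduce_common_second_neighbor:
  assumes irr: "irregular_subcubic E ends" and adm: "admissible_pins E ends D"
    and IH: "proper_subgraphs_colorable E ends" and hu: "deg E ends u = 3"
    and hy: "deg E ends y = 3" and yu: "y \<noteq> u"
    and common: "\<forall>a\<in>edges_at E ends u.
      edges_at (edges_avoiding E ends {u}) ends (other_end ends u a) \<subseteq> edges_at E ends y"
  shows "\<exists>c. good_coloring E ends D c"
proof -
  define E' where "E' = edges_avoiding E ends {u}"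
  define w where "w = other_end ends u"
  let ?A = "edges_at E ends u"
  have fin: "finite E" by (rule irregular_subcubic_finite[OF irr])
  have irr': "irregular_subcubic E' ends" unfolding E'_def
    by (rule irregular_subcubic_avoiding[OF irr])
  have wa: "ends a = {u, w a}" "a \<in> edges_at E ends (w a)" "a \<notin> E'" "deg E ends (w a) \<le> 2"
    "w a \<noteq> y" if "a \<in> ?A" for a
    using other_end[OF irr that] deg_nbr_of_deg3[OF irr hu other_end_in_nbrs[OF irr that]] that hy
    unfolding w_def E'_def by auto
  have common': "edges_at E' ends (w a) \<subseteq> edges_at E' ends y" if "a \<in> ?A" for a
    using common that unfolding E'_def w_def by fastforce
  have "edges_at E' ends y = edges_at E ends y"
    using no_edge_joins_deg3[OF irr _ _ _ yu hy hu] unfolding E'_def by auto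
  then have hy': "deg E' ends y = 3" using hy by simp
  obtain c' where good': "good_coloring E' ends D c'"
    using proper_subgraphs_colorable_avoiding[OF IH irr admissible_pins_avoiding[OF irr adm]
        deg3_edges_at_nonempty[OF hu]]
    unfolding E'_def .
  obtain d where d: "d \<in> {3,4}" "d \<notin> c' ` edges_at E' ends y"
  proof -
    obtain e0 where "e0 \<in> edges_at E' ends y" "c' e0 = 1"
      using good_coloring_deg3[OF good' hy'] by auto
    then show ?thesis using good_coloring_free_color_at[OF irr' good'] that by (metis insertI1)
  qed
  obtain a where a: "a \<in> ?A" "ends a \<inter> D = {}" by (rule admissible_pins_unpinned_edge[OF adm hu])
  obtain b b' where A: "?A = {a, b, b'}" "a \<noteq> b" "a \<noteq> b'" "b \<noteq> b'"
    by (rule card_3_elemE[OF hu a(1)])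
  have bA: "b \<in> ?A" "b' \<in> ?A" using A by auto
  have seen: "finite (c' ` edges_at E' ends (w e))" "card (c' ` edges_at E' ends (w e)) \<le> 1"
    if "e \<in> ?A" for e
  proof -
    have le: "deg E' ends (w e) \<le> 1"
      using deg_avoiding_le_pred[OF fin, of e "w e" ends u] wa[OF that] that unfolding E'_def
        by auto
    show "finite (c' ` edges_at E' ends (w e))"
      by (rule card_image_edges_at_le1(1)[OF irregular_subcubic_finite[OF irr'] le])
    show "card (c' ` edges_at E' ends (w e)) \<le> 1"
      by (rule card_image_edges_at_le1(2)[OF irregular_subcubic_finite[OF irr'] le])
  qed
  have differ: "\<not> (c' ` edges_at E' ends (w b) \<noteq> {} \<and>
                   c' ` edges_at E' ends (w b) = c' ` edges_at E' ends (w b'))"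
  proof (cases "w b = w b'")
    case True
    then have "edges_at E ends (w b) = {b, b'}"
      using card_le2_pair[OF wa(4)[OF bA(1)] finite_edges_at[OF fin] wa(2)[OF bA(1)]]
        wa(2)[OF bA(2)] A(4)
      by simp
    then have "edges_at E' ends (w b) = {}" using wa(3) bA unfolding E'_def by auto
    then show ?thesis by simp
  next
    case False
    then show ?thesis
      using good_coloring_seen_differ[OF irr' good' common'[OF bA(1)] common'[OF bA(2)]] wa(5) bA
        by blast
  qed
  obtain s t where st: "{s, t} = {1, 2}" "s \<notin> c' ` edges_at E' ends (w b)"
    "t \<notin> c' ` edges_at E' ends (w b')"
    using two_colors_avoiding[OF seen[OF bA(1)] seen[OF bA(2)] differ] by blast
  show ?thesis
  proof (rule good_coloring_extend_at_deg3_vertex[OF irr hu good'[unfolded E'_def] _ A a(2) d(1)])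
    show "d \<notin> c' ` edges_near (edges_avoiding E ends {u}) ends (other_end ends u a)"
      using d(2) edges_near_subset_edges_at[OF irr' common'[OF a(1)] wa(5)[OF a(1)]]
      unfolding E'_def w_def by blast
    show "d \<notin> c' ` edges_at (edges_avoiding E ends {u}) ends (other_end ends u b)"
      "d \<notin> c' ` edges_at (edges_avoiding E ends {u}) ends (other_end ends u b')"
      using d(2) common'[OF bA(1)] common'[OF bA(2)] unfolding E'_def w_def by blast+
  qed (use st in \<open>auto simp: E'_def w_def\<close>)
qed

text \<open>\<open>unsafe\<close> says that all three edges at \<open>y\<close> meet a pin or a neighbor of \<open>u\<close>.\<close>
lemma unsafe_unpinned_edge:
  assumes irr: "irregular_subcubic E ends" and adm: "admissible_pins E ends D"
    and hu: "deg E ends u = 3" and hy: "deg E ends y = 3" and yu: "y \<noteq> u"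
    and unsafe: "2 < card (pinned_edges_at E ends (D \<union> nbrs E ends u) y)"
    and e: "e \<in> edges_at E ends y" "ends e \<inter> D = {}"
  obtains a where "a \<in> edges_at E ends u" "ends a \<inter> D = {}" "u \<notin> ends e"
    "other_end ends u a = other_end ends y e" "edges_at E ends (other_end ends y e) = {a, e}"
proof -
  define t where "t = other_end ends y e"
  have fin: "finite E" by (rule irregular_subcubic_finite[OF irr])
  have sub: "pinned_edges_at E ends (D \<union> nbrs E ends u) y \<subseteq> edges_at E ends y" by auto
  moreover have "card (pinned_edges_at E ends (D \<union> nbrs E ends u) y) = deg E ends y"
    using card_mono[OF finite_edges_at[OF fin] sub] unsafe hy by simp
  ultimately have "pinned_edges_at E ends (D \<union> nbrs E ends u) y = edges_at E ends y"
    by (rule card_subset_eq[OF finite_edges_at[OF fin]])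
  then have "e \<in> pinned_edges_at E ends (D \<union> nbrs E ends u) y" using e(1) by simp
  moreover have "y \<notin> nbrs E ends u"
    using no_edge_joins_deg3[OF irr _ _ _ yu hy hu] unfolding nbrs_iff by blast
  moreover have ends_e: "ends e = {y, t}" using other_end(1)[OF irr e(1)] unfolding t_def .
  ultimately have t: "t \<in> nbrs E ends u" "t \<notin> D" using e(2) by auto
  then have "t \<noteq> u" unfolding nbrs_iff by simp
  obtain a where a: "a \<in> edges_at E ends u" "ends a = {u, t}" using nbrs_edgeE[OF irr t(1)] .
  have "other_end ends u a = t"
    using other_end[OF irr a(1)] a(2) \<open>t \<noteq> u\<close> by (metis doubleton_eq_iff)
  moreover have "ends a \<inter> D = {}" using a(2) t(2) admissible_pins_notin[OF adm] hu by auto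
  moreover have "u \<notin> ends e" using ends_e yu \<open>t \<noteq> u\<close> by auto
  moreover have "edges_at E ends t = {a, e}"
  proof (rule card_le2_pair[OF deg_nbr_of_deg3[OF irr hu t(1)] finite_edges_at[OF fin]])
    show "a \<noteq> e" using a(1) \<open>u \<notin> ends e\<close> by auto
  qed (use a e ends_e in auto)
  ultimately show ?thesis using that a(1) unfolding t_def by blast
qed

text \<open>The unpinned edges at \<open>y\<close> lead injectively to neighbors of \<open>u\<close> across unpinned edges;
  as \<open>u\<close> has at least as many pinned edges as \<open>y\<close>, every unpinned edge at \<open>u\<close> is reached.\<close>
lemma unsafe_vertex_common_second_neighbor:
  assumes irr: "irregular_subcubic E ends" and adm: "admissible_pins E ends D"
    and hu: "deg E ends u = 3" and hy: "deg E ends y = 3" and yu: "y \<noteq> u"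
    and max: "card (pinned_edges_at E ends D y) \<le> card (pinned_edges_at E ends D u)"
    and unsafe: "2 < card (pinned_edges_at E ends (D \<union> nbrs E ends u) y)"
  shows "\<forall>a\<in>edges_at E ends u.
           edges_at (edges_avoiding E ends {u}) ends (other_end ends u a) \<subseteq> edges_at E ends y"
proof -
  define w where "w = other_end ends u"
  define t where "t = other_end ends y"
  define Y where "Y = edges_at E ends y - pinned_edges_at E ends D y"
  define U where "U = edges_at E ends u - pinned_edges_at E ends D u"
  have fin: "finite E" by (rule irregular_subcubic_finite[OF irr])
  have finUY: "finite U" "finite Y" unfolding U_def Y_def by (simp_all add: finite_edges_at[OF fin])
  have via_u: "\<exists>a\<in>U. w a = t e \<and> edges_at E ends (t e) = {a, e} \<and> u \<notin> ends e" if "e \<in> Y" for e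
  proof -
    have e: "e \<in> edges_at E ends y" "ends e \<inter> D = {}" using that unfolding Y_def by auto
    obtain a where "a \<in> edges_at E ends u" "ends a \<inter> D = {}" "u \<notin> ends e"
      "other_end ends u a = other_end ends y e" "edges_at E ends (other_end ends y e) = {a, e}"
      by (rule unsafe_unpinned_edge[OF irr adm hu hy yu unsafe e])
    then show ?thesis unfolding U_def w_def t_def by auto
  qed
  have inj: "inj_on t Y"
  proof (rule inj_onI)
    fix e e' assume e: "e \<in> Y" "e' \<in> Y" "t e = t e'"
    obtain a where "edges_at E ends (t e) = {a, e}" "a \<in> U" "u \<notin> ends e"
      using via_u[OF e(1)] by blast
    moreover obtain a' where "edges_at E ends (t e') = {a', e'}" "a' \<in> U" "u \<notin> ends e'"
      using via_u[OF e(2)] by blast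
    moreover have "u \<in> ends a" "u \<in> ends a'" using \<open>a \<in> U\<close> \<open>a' \<in> U\<close> unfolding U_def by auto
    ultimately show "e = e'" using e by (metis doubleton_eq_iff)
  qed
  have "t ` Y \<subseteq> w ` U" using via_u by force
  moreover have "card (w ` U) \<le> card (t ` Y)"
  proof -
    have "card (w ` U) \<le> card U" by (rule card_image_le[OF finUY(1)])
    also have "\<dots> = 3 - card (pinned_edges_at E ends D u)" unfolding U_def
      using hu by (subst card_Diff_subset) (auto simp: finite_pinned_edges_at[OF fin])
    also have "\<dots> \<le> 3 - card (pinned_edges_at E ends D y)" using max by simp
    also have "\<dots> = card Y" unfolding Y_def
      using hy by (subst card_Diff_subset) (auto simp: finite_pinned_edges_at[OF fin])
    also have "\<dots> = card (t ` Y)" using card_image[OF inj] by simp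
    finally show ?thesis .
  qed
  ultimately have onto: "t ` Y = w ` U"
    using card_mono[of "w ` U" "t ` Y"] finUY by (intro card_subset_eq) simp_all
  show ?thesis
  proof (intro ballI subsetI)
    fix a f assume a: "a \<in> edges_at E ends u"
      and f: "f \<in> edges_at (edges_avoiding E ends {u}) ends (other_end ends u a)"
    show "f \<in> edges_at E ends y"
    proof (cases "a \<in> U")
      case True
      then obtain e where e: "e \<in> Y" "w a = t e" using onto by (metis imageE imageI)
      then obtain a' where "a' \<in> U" "edges_at E ends (w a) = {a', e}" using via_u by metis
      moreover have "e \<in> edges_at E ends y" using e(1) unfolding Y_def by simp
      ultimately show ?thesis using f unfolding U_def w_def by auto
    next
      case False
      then have "w a \<in> D"
        using a other_end(1)[OF irr a] admissible_pins_notin[OF adm] hu unfolding U_def w_def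
          by auto
      then have "edges_at E ends (w a) = {a}"
        by (rule admissible_pins_single[OF irr adm])
          (use a other_end(1)[OF irr a] in \<open>auto simp: w_def\<close>)
      moreover have "f \<in> edges_at E ends (w a)" "f \<noteq> a" using f a unfolding w_def by auto
      ultimately show ?thesis by simp
    qed
  qed
qed

lemma reduce_max_deg2:
  assumes irr: "irregular_subcubic E ends" and adm: "admissible_pins E ends D"
    and IH: "proper_subgraphs_colorable E ends" and low: "\<forall>v. deg E ends v \<le> 2"
  shows "\<exists>c. good_coloring E ends D c"
proof (cases "E = {}")
  case True
  then have "good_coloring E ends D (\<lambda>_. 1)"
    unfolding good_coloring_def packing_coloring_def by (simp add: edges_at_def)
  then show ?thesis by blast
next
  case False
  then obtain e where e: "e \<in> E" by blast
  then have "ends e \<noteq> {}" using irregular_subcubic_two_ends[OF irr e] by auto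
  then obtain w where "w \<in> ends e" by blast
  then have "edges_at E ends w \<noteq> {}" using e by auto
  then obtain c' where "good_coloring (edges_avoiding E ends {w}) ends (D \<union> nbrs E ends w) c'"
    using proper_subgraphs_colorable_avoiding[OF IH irr
        admissible_pins_remove_vertex_max_deg2[OF irr adm low]]
    by blast
  then show ?thesis by (rule good_coloring_extend_max_deg2[OF irr adm low])
qed

section \<open>Existence of good colorings\<close>

lemma deg3_vertex_max_pinned:
  assumes "\<exists>v. deg E ends v = 3"
  obtains u where "deg E ends u = 3"
    "\<forall>v. deg E ends v = 3 \<longrightarrow> card (pinned_edges_at E ends D v) \<le> card (pinned_edges_at E ends D u)"
proof -
  have "card (pinned_edges_at E ends D v) < 4" if "deg E ends v = 3" for v
  proof -
    have "finite (edges_at E ends v)" using that by (metis card.infinite zero_neq_numeral)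
    then have "card (pinned_edges_at E ends D v) \<le> deg E ends v" by (intro card_mono) auto
    then show ?thesis using that by simp
  qed
  moreover obtain v0 where "deg E ends v0 = 3" using assms by blast
  ultimately show ?thesis
    using Lattices_Big.ex_has_greatest_nat[of "\<lambda>v. deg E ends v = 3" v0
        "\<lambda>v. card (pinned_edges_at E ends D v)" 4] that by blast
qed

theorem good_coloring_exists:
  assumes "irregular_subcubic E ends" and "admissible_pins E ends D"
  shows "\<exists>c. good_coloring E ends D c"
proof -
  have "finite E" by (rule irregular_subcubic_finite[OF assms(1)])
  then show ?thesis using assms
  proof (induction E arbitrary: D rule: finite_psubset_induct)
    case (psubset E)
    note irr = psubset.prems(1) and adm = psubset.prems(2)
    have IH: "proper_subgraphs_colorable E ends"
      unfolding proper_subgraphs_colorable_def using psubset.IH by blast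
    show ?case
    proof (cases "\<exists>v. deg E ends v = 3")
      case False
      have "\<forall>v. deg E ends v \<le> 2"
      proof
        fix v
        have "deg E ends v \<noteq> 3" using False by blast
        then show "deg E ends v \<le> 2" using irregular_subcubic_deg_le3[OF irr, of v] by linarith
      qed
      then show ?thesis by (rule reduce_max_deg2[OF irr adm IH])
    next
      case True
      then obtain u where hu: "deg E ends u = 3" and max:
        "\<forall>v. deg E ends v = 3 \<longrightarrow>
           card (pinned_edges_at E ends D v) \<le> card (pinned_edges_at E ends D u)"
        by (rule deg3_vertex_max_pinned)
      show ?thesis
      proof (cases "\<forall>v. deg E ends v = 3 \<longrightarrow> v \<noteq> u \<longrightarrow>
                       card (pinned_edges_at E ends (D \<union> nbrs E ends u) v) \<le> 2")
        case True
        then show ?thesis by (rule reduce_safe_vertex[OF irr adm IH hu])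
      next
        case False
        then obtain y where y: "deg E ends y = 3" "y \<noteq> u"
          "2 < card (pinned_edges_at E ends (D \<union> nbrs E ends u) y)" by auto
        show ?thesis
          using reduce_common_second_neighbor[OF irr adm IH hu y(1,2)]
            unsafe_vertex_common_second_neighbor[OF irr adm hu y(1,2)
              max[rule_format, OF y(1)] y(3)]
          by blast
      qed
    qed
  qed
qed

lemma degree_eq_deg: "loopless E ends \<Longrightarrow> degree E ends v = deg E ends v"
proof -
  assume "loopless E ends"
  then have "degree E ends v = (\<Sum>e\<in>edges_at E ends v. 1)"
    unfolding degree_def edges_at_def loopless_def by (intro sum.cong) auto
  then show ?thesis by simp
qed

lemma irregular_subcubic_if_irregular3:
  assumes mg: "multigraph V E ends" and ll: "loopless E ends"
    and ir: "irregular3 V E ends" and sc: "subcubic V E ends"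
  shows "irregular_subcubic E ends"
proof -
  have sub: "ends e \<subseteq> V" if "e \<in> E" for e using mg that unfolding multigraph_def by auto
  have two: "card (ends e) = 2" if "e \<in> E" for e using ll that unfolding loopless_def by auto
  have le3: "deg E ends v \<le> 3" for v
  proof (cases "v \<in> V")
    case True then show ?thesis using sc degree_eq_deg[OF ll] unfolding subcubic_def by metis
  next
    case False
    then have "edges_at E ends v = {}" using sub unfolding edges_at_def by blast
    then show ?thesis by simp
  qed
  have "\<exists>x\<in>ends e. deg E ends x \<le> 2" if e: "e \<in> E" for e
  proof -
    obtain x y where xy: "ends e = {x, y}" "x \<noteq> y" using two[OF e] card_2_iff by metis
    then have "x \<in> V" "y \<in> V" "adjacent E ends x y" using sub[OF e] e unfolding adjacent_def by auto
    then have "\<not> (deg E ends x = 3 \<and> deg E ends y = 3)"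
      using ir degree_eq_deg[OF ll] unfolding irregular3_def by metis
    then show ?thesis using le3[of x] le3[of y] xy by force
  qed
  then show ?thesis using mg two le3 unfolding irregular_subcubic_def multigraph_def by blast
qed

lemma packing_1122_if_packing_coloring:
  assumes "packing_coloring E ends col"
  shows "packing_1122 E ends {e\<in>E. col e = 1} {e\<in>E. col e = 2} {e\<in>E. col e = 3} {e\<in>E. col e = 4}"
  using assms unfolding packing_1122_def packing_coloring_def dist_ge2_def dist_ge3_def
  by (intro conjI) (fastforce+)

theorem theorem1:
  fixes V :: "'v set" and E :: "'e set" and ends :: "'e \<Rightarrow> 'v set"
  assumes "multigraph V E ends"
    and "loopless E ends"
    and "irregular3 V E ends"
    and "subcubic V E ends"
  shows "\<exists>E1 E2 E3 E4. packing_1122 E ends E1 E2 E3 E4"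
proof -
  have irr: "irregular_subcubic E ends" by (rule irregular_subcubic_if_irregular3[OF assms])
  have "admissible_pins E ends {}" unfolding admissible_pins_def pinned_edges_at_def by simp
  then obtain col where "good_coloring E ends {} col" using good_coloring_exists[OF irr] by blast
  then show ?thesis using packing_1122_if_packing_coloring[OF good_coloring_packing] by blast
qed

end
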